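(* Let $\mathcal{N}$ be a cactus network and $u\succcurlyeq v$ vertices of $\mathcal{N}$. Then the union of all directed paths from $u$ to $v$ is a branching path, i.e., there exist $m\ge0$ and vertices $s_1,t_1,\dots,s_m,t_m$ such that this union equals the union of the pieces of the alternating sequence $$u\rightarrow s_1\rightrightarrows t_1\rightarrow s_2\rightrightarrows t_2\rightarrow\cdots\rightarrow s_m\rightrightarrows t_m\rightarrow v,$$ where each $x\rightarrow y$ denotes the unique directed path from $x$ to $y$ (possibly of length $0$; uniqueness being part of the claim), and each $s_j\rightrightarrows t_j$ is a simple branching path.
   Context: A cactus network is a finite directed acyclic graph $\mathcal{N}$ with a unique vertex of indegree $0$ (the root) such that in its underlying undirected graph $\mathcal{N}^\star$ every edge belongs to at most one simple cycle. $u\succcurlyeq v$ means there is a directed path (possibly of length $0$) from $u$ to $v$. A lowest common ancestor of a set $V$ is a vertex $u$ that is an ancestor of all of $V$ with no proper descendant having this property; in a cactus network it is unique. A sink is a vertex of indegree $2$. If $t$ is a sink with parents $p_l,p_r$, its source is the lowest common ancestor $s$ of $\{p_l,p_r\}$; the directed paths from $s$ to $p_l$ and from $s$ to $p_r$ are unique and edge-disjoint, and appending the edges $(p_l,t)$, $(p_r,t)$ gives two paths $P_1,P_2$ from $s$ to $t$. The unordered pair $\{P_1,P_2\}$ (viewed as the union of these two paths) is called a simple branching path, denoted $s\rightrightarrows t$, and $P_1,P_2$ are its branches. *)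

theory Defs
  imports Main
begin

definition reach :: "('a \<times> 'a) set \<Rightarrow> 'a \<Rightarrow> 'a \<Rightarrow> bool" where
  "reach E u v \<longleftrightarrow> (u, v) \<in> E\<^sup>*"

definition is_dpath :: "('a \<times> 'a) set \<Rightarrow> 'a list \<Rightarrow> 'a \<Rightarrow> 'a \<Rightarrow> bool" where
  "is_dpath E xs u v \<longleftrightarrow> xs \<noteq> [] \<and> hd xs = u \<and> last xs = v \<and>
     (\<forall>i. Suc i < length xs \<longrightarrow> (xs ! i, xs ! Suc i) \<in> E)"

definition path_edges :: "'a list \<Rightarrow> ('a \<times> 'a) set" where
  "path_edges xs = {(xs ! i, xs ! Suc i) | i. Suc i < length xs}"

definition paths_V :: "('a \<times> 'a) set \<Rightarrow> 'a \<Rightarrow> 'a \<Rightarrow> 'a set" where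
  "paths_V E u v = (\<Union> {set xs | xs. is_dpath E xs u v})"

definition paths_E :: "('a \<times> 'a) set \<Rightarrow> 'a \<Rightarrow> 'a \<Rightarrow> ('a \<times> 'a) set" where
  "paths_E E u v = (\<Union> {path_edges xs | xs. is_dpath E xs u v})"

text \<open>Simple cycles of the underlying undirected graph, represented by their sets of
  undirected edges.\<close>
definition undir_cycles :: "('a \<times> 'a) set \<Rightarrow> 'a set set set" where
  "undir_cycles E = {{{cs ! i, cs ! ((Suc i) mod length cs)} | i. i < length cs} | cs.
      distinct cs \<and> length cs \<ge> 3 \<and>
      (\<forall>i < length cs. (cs ! i, cs ! ((Suc i) mod length cs)) \<in> E \<or>
                        (cs ! ((Suc i) mod length cs), cs ! i) \<in> E)}"

definition cactus_network :: "'a set \<Rightarrow> ('a \<times> 'a) set \<Rightarrow> bool" where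
  "cactus_network V E \<longleftrightarrow>
     finite V \<and> E \<subseteq> V \<times> V \<and>
     (\<forall>x. (x, x) \<notin> E\<^sup>+) \<and>
     (\<exists>!r. r \<in> V \<and> (\<forall>x. (x, r) \<notin> E)) \<and>
     (\<forall>x y. (x, y) \<in> E \<longrightarrow> (\<forall>C1 \<in> undir_cycles E. \<forall>C2 \<in> undir_cycles E.
          {x, y} \<in> C1 \<longrightarrow> {x, y} \<in> C2 \<longrightarrow> C1 = C2))"

definition parents :: "('a \<times> 'a) set \<Rightarrow> 'a \<Rightarrow> 'a set" where
  "parents E t = {p. (p, t) \<in> E}"

definition is_sink :: "('a \<times> 'a) set \<Rightarrow> 'a \<Rightarrow> bool" where
  "is_sink E t \<longleftrightarrow> card (parents E t) = 2"

definition is_lca :: "'a set \<Rightarrow> ('a \<times> 'a) set \<Rightarrow> 'a set \<Rightarrow> 'a \<Rightarrow> bool" where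
  "is_lca V E A w \<longleftrightarrow> w \<in> V \<and> (\<forall>a \<in> A. reach E w a) \<and>
     (\<forall>w'. w' \<noteq> w \<and> reach E w w' \<and> (\<forall>a \<in> A. reach E w' a) \<longrightarrow> False)"

definition is_sbp :: "'a set \<Rightarrow> ('a \<times> 'a) set \<Rightarrow> 'a \<Rightarrow> 'a \<Rightarrow> bool" where
  "is_sbp V E s t \<longleftrightarrow> t \<in> V \<and> is_sink E t \<and> is_lca V E (parents E t) s"

definition sbp_V :: "('a \<times> 'a) set \<Rightarrow> 'a \<Rightarrow> 'a \<Rightarrow> 'a set" where
  "sbp_V E s t = insert t (\<Union>p \<in> parents E t. paths_V E s p)"

definition sbp_E :: "('a \<times> 'a) set \<Rightarrow> 'a \<Rightarrow> 'a \<Rightarrow> ('a \<times> 'a) set" where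
  "sbp_E E s t = (\<Union>p \<in> parents E t. insert (p, t) (paths_E E s p))"

end

theory Submission
  imports Defs
begin

text \<open>Induction on the number of vertices lying on \<open>u\<close>--\<open>v\<close> paths. If only one out-neighbour
  \<open>w\<close> of \<open>u\<close> reaches \<open>v\<close>, the edge \<open>(u, w)\<close> is the unique \<open>u\<close>--\<open>w\<close> path and every
  \<open>u\<close>--\<open>v\<close> path passes through \<open>w\<close>. Otherwise two paths leave \<open>u\<close> through different edges;
  followed up to their first common vertex \<open>y\<close> they form a cycle \<open>C\<close> of the underlying
  graph. Since distinct cycles of a cactus share no edge, a directed path with both ends on \<open>C\<close>
  runs along \<open>C\<close> (an ear would split \<open>C\<close> into two cycles through its first edge). This
  forces \<open>y\<close> to have exactly the two parents on \<open>C\<close>, \<open>u\<close> to be their lowest common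
  ancestor, and every \<open>u\<close>--\<open>v\<close> path to pass through \<open>y\<close>: so \<open>u \<rightrightarrows> y\<close> is a simple
  branching path, and the induction continues from \<open>y\<close>.\<close>

section \<open>Directed paths\<close>

lemma is_dpath_iff_successively:
  "is_dpath E xs u v \<longleftrightarrow>
     xs \<noteq> [] \<and> hd xs = u \<and> last xs = v \<and> successively (\<lambda>x y. (x, y) \<in> E) xs"
  unfolding is_dpath_def successively_conv_nth by auto

lemma is_dpathD: "is_dpath E xs u v \<Longrightarrow> xs \<noteq> [] \<and> hd xs = u \<and> last xs = v"
  unfolding is_dpath_def by auto

lemma hd_in_dpath: "is_dpath E xs u v \<Longrightarrow> u \<in> set xs"
  by (metis is_dpathD list.set_sel(1))

lemma last_in_dpath: "is_dpath E xs u v \<Longrightarrow> v \<in> set xs"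
  by (metis is_dpathD last_in_set)

lemma is_dpath_singleton [simp]: "is_dpath E [x] u v \<longleftrightarrow> u = x \<and> v = x"
  unfolding is_dpath_def by auto

lemma path_edges_iff:
  "(a, b) \<in> path_edges xs \<longleftrightarrow> (\<exists>i. Suc i < length xs \<and> a = xs ! i \<and> b = xs ! Suc i)"
  unfolding path_edges_def by auto

lemma path_edges_Nil [simp]: "path_edges [] = {}"
  and path_edges_singleton [simp]: "path_edges [x] = {}"
  by (simp_all add: path_edges_def)

lemma path_edges_Cons_Cons [simp]: "path_edges (x # y # zs) = insert (x, y) (path_edges (y # zs))"
proof (rule set_eqI, clarify)
  fix a b
  show "(a, b) \<in> path_edges (x # y # zs) \<longleftrightarrow> (a, b) \<in> insert (x, y) (path_edges (y # zs))"
  proof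
    assume "(a, b) \<in> path_edges (x # y # zs)"
    then obtain i where i: "Suc i < length (x # y # zs)"
        "a = (x # y # zs) ! i" "b = (x # y # zs) ! Suc i"
      unfolding path_edges_iff by blast
    show "(a, b) \<in> insert (x, y) (path_edges (y # zs))"
    proof (cases i)
      case 0 then show ?thesis using i by simp
    next
      case (Suc k)
      have "(a, b) \<in> path_edges (y # zs)" unfolding path_edges_iff using i Suc
        by (intro exI[of _ k]) auto
      then show ?thesis by simp
    qed
  next
    assume "(a, b) \<in> insert (x, y) (path_edges (y # zs))"
    then consider "(a, b) = (x, y)" | "(a, b) \<in> path_edges (y # zs)" by blast
    then show "(a, b) \<in> path_edges (x # y # zs)"
    proof cases
      case 1 then show ?thesis unfolding path_edges_iff by (intro exI[of _ 0]) auto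
    next
      case 2
      then obtain i where i: "Suc i < length (y # zs)" "a = (y # zs) ! i" "b = (y # zs) ! Suc i"
        unfolding path_edges_iff by blast
      then show ?thesis unfolding path_edges_iff by (intro exI[of _ "Suc i"]) auto
    qed
  qed
qed

lemma path_edges_Cons:
  "path_edges (x # xs) = (if xs = [] then {} else insert (x, hd xs) (path_edges xs))"
  by (cases xs) auto

lemma path_edges_append:
  "path_edges (xs @ ys) =
     path_edges xs \<union> path_edges ys \<union> (if xs \<noteq> [] \<and> ys \<noteq> [] then {(last xs, hd ys)} else {})"
  by (induction xs rule: induct_list012) (auto simp: path_edges_Cons)

lemma path_edges_snoc: "xs \<noteq> [] \<Longrightarrow> path_edges (xs @ [y]) = insert (last xs, y) (path_edges xs)"
  by (simp add: path_edges_append)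

lemma path_edges_memD: "(a, b) \<in> path_edges xs \<Longrightarrow> a \<in> set xs \<and> b \<in> set xs"
  unfolding path_edges_iff by auto

lemma successively_path_edges: "successively (\<lambda>x y. (x, y) \<in> path_edges xs) xs"
  unfolding successively_conv_nth path_edges_def by auto

lemma path_edges_fst_neq_last:
  assumes "distinct xs" "(x, y) \<in> path_edges xs"
  shows "x \<noteq> last xs"
proof -
  obtain i where i: "Suc i < length xs" "x = xs ! i" "y = xs ! Suc i"
    using assms(2) unfolding path_edges_iff by blast
  have ne: "xs \<noteq> []" using i(1) by (cases xs) auto
  have "last xs = xs ! (length xs - 1)" using ne by (simp add: last_conv_nth)
  moreover have "xs ! i \<noteq> xs ! (length xs - 1)"
    using nth_eq_iff_index_eq[OF assms(1), of i "length xs - 1"] i(1) by auto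
  ultimately show ?thesis using i by simp
qed

lemma path_edges_snd_neq_hd:
  assumes "distinct xs" "(x, y) \<in> path_edges xs"
  shows "y \<noteq> hd xs"
proof -
  obtain i where i: "Suc i < length xs" "x = xs ! i" "y = xs ! Suc i"
    using assms(2) unfolding path_edges_iff by blast
  have ne: "xs \<noteq> []" using i(1) by (cases xs) auto
  have "hd xs = xs ! 0" using ne by (simp add: hd_conv_nth)
  moreover have "xs ! Suc i \<noteq> xs ! 0"
    using nth_eq_iff_index_eq[OF assms(1), of "Suc i" 0] i(1) ne by auto
  ultimately show ?thesis using i by simp
qed

lemma path_edges_into_last_unique:
  assumes "distinct xs" "(x, last xs) \<in> path_edges xs" "(x', last xs) \<in> path_edges xs"
  shows "x = x'"
proof -
  obtain i where i: "Suc i < length xs" "x = xs ! i" "last xs = xs ! Suc i"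
    using assms(2) unfolding path_edges_iff by blast
  obtain i' where i': "Suc i' < length xs" "x' = xs ! i'" "last xs = xs ! Suc i'"
    using assms(3) unfolding path_edges_iff by blast
  have "Suc i = Suc i'" using nth_eq_iff_index_eq[OF assms(1) i(1) i'(1)] i(3) i'(3) by simp
  then show ?thesis using i i' by simp
qed

lemma last_edge_in_path_edges:
  assumes "length xs \<ge> 2"
  shows "(xs ! (length xs - 2), last xs) \<in> path_edges xs"
proof -
  have "Suc (length xs - 2) < length xs" "Suc (length xs - 2) = length xs - 1" using assms by arith+
  moreover have "last xs = xs ! (length xs - 1)"
    using assms by (cases xs) (auto simp: last_conv_nth)
  ultimately show ?thesis unfolding path_edges_iff by (intro exI[of _ "length xs - 2"]) simp
qed

lemma ex_path_edge_into:
  assumes "w \<in> set xs" "w \<noteq> hd xs"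
  shows "\<exists>x. (x, w) \<in> path_edges xs"
proof -
  obtain i where i: "i < length xs" "xs ! i = w" using assms(1) by (metis in_set_conv_nth)
  have ne: "xs \<noteq> []" using i(1) by (cases xs) auto
  have "i \<noteq> 0"
  proof
    assume "i = 0"
    then have "w = hd xs" using i ne by (simp add: hd_conv_nth)
    then show False using assms(2) by simp
  qed
  then obtain k where k: "i = Suc k" by (cases i) auto
  show ?thesis unfolding path_edges_iff using i k by (intro exI[of _ "xs ! k"] exI[of _ k]) simp
qed

lemma dpath_path_edges_subset: "is_dpath E xs u v \<Longrightarrow> path_edges xs \<subseteq> E"
  unfolding is_dpath_def path_edges_def by auto

lemma dpath_Cons: "is_dpath E xs v w \<Longrightarrow> (u, v) \<in> E \<Longrightarrow> is_dpath E (u # xs) u w"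
  unfolding is_dpath_iff_successively by (auto simp: successively_Cons)

lemma dpath_snoc: "is_dpath E xs u v \<Longrightarrow> (v, w) \<in> E \<Longrightarrow> is_dpath E (xs @ [w]) u w"
  unfolding is_dpath_iff_successively by (auto simp: successively_append_iff)

lemma dpath_append:
  assumes "is_dpath E xs u w" "is_dpath E ys w v"
  shows "is_dpath E (xs @ tl ys) u v"
proof -
  obtain zs where ys: "ys = w # zs"
    using is_dpathD[OF assms(2)] by (cases ys) auto
  with assms show ?thesis
    unfolding is_dpath_iff_successively
    by (cases zs) (auto simp: successively_append_iff successively_Cons)
qed

lemma set_dpath_append:
  assumes "is_dpath E xs u w" "is_dpath E ys w v"
  shows "set (xs @ tl ys) = set xs \<union> set ys"
proof -
  have "set ys = insert w (set (tl ys))"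
    using is_dpathD[OF assms(2)] by (metis list.collapse list.simps(15))
  then show ?thesis using last_in_dpath[OF assms(1)] by auto
qed

lemma path_edges_dpath_append:
  assumes "is_dpath E xs u w" "is_dpath E ys w v"
  shows "path_edges (xs @ tl ys) = path_edges xs \<union> path_edges ys"
proof -
  obtain zs where "ys = w # zs" using is_dpathD[OF assms(2)] by (metis list.collapse)
  then show ?thesis using is_dpathD[OF assms(1)] by (auto simp: path_edges_append path_edges_Cons)
qed

lemma dpath_trancl:
  assumes "is_dpath E xs u v" "i < j" "j < length xs"
  shows "(xs ! i, xs ! j) \<in> E\<^sup>+"
  using assms(2,3)
proof (induction j)
  case (Suc j)
  have "(xs ! j, xs ! Suc j) \<in> E" using assms(1) Suc.prems unfolding is_dpath_def by auto
  with Suc show ?case by (cases "i = j") auto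
qed simp

lemma dpath_reach: "is_dpath E xs u v \<Longrightarrow> reach E u v"
  unfolding is_dpath_iff_successively reach_def
proof (induction xs arbitrary: u rule: induct_list012)
  case (3 x y zs)
  then have "(y, v) \<in> E\<^sup>*" by (auto simp: successively_Cons)
  with 3 show ?case by (auto simp: successively_Cons)
qed auto

lemma reach_imp_dpath: "reach E u v \<Longrightarrow> \<exists>xs. is_dpath E xs u v"
  unfolding reach_def
proof (induction rule: rtrancl_induct)
  case base
  show ?case by (rule exI[of _ "[u]"]) simp
next
  case (step y z)
  then show ?case using dpath_snoc by metis
qed

lemma reach_trans: "reach E x y \<Longrightarrow> reach E y z \<Longrightarrow> reach E x z"
  unfolding reach_def by auto

lemma edge_reach: "(x, y) \<in> E \<Longrightarrow> reach E x y"
  unfolding reach_def by auto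

lemma reach_antisym: "acyclic E \<Longrightarrow> reach E x y \<Longrightarrow> reach E y x \<Longrightarrow> x = y"
  unfolding acyclic_def reach_def by (metis rtrancl_eq_or_trancl rtrancl_trancl_trancl)

lemma acyclic_edge_not_reach: "acyclic E \<Longrightarrow> (x, y) \<in> E \<Longrightarrow> \<not> reach E y x"
  unfolding acyclic_def reach_def by (meson rtrancl_into_trancl2)

lemma acyclic_edge_neq: "acyclic E \<Longrightarrow> (x, y) \<in> E \<Longrightarrow> x \<noteq> y"
  unfolding acyclic_def by auto

lemma dpath_distinct: "acyclic E \<Longrightarrow> is_dpath E xs u v \<Longrightarrow> distinct xs"
  unfolding acyclic_def by (metis distinct_conv_nth dpath_trancl linorder_neqE_nat)

lemma dpath_take:
  assumes "is_dpath E xs u v" "i < length xs"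
  shows "is_dpath E (take (Suc i) xs) u (xs ! i)"
  using assms unfolding is_dpath_def
proof (intro conjI)
  show "last (take (Suc i) xs) = xs ! i" using assms(2) by (simp add: take_Suc_conv_app_nth)
qed (auto simp: hd_conv_nth)

lemma dpath_drop:
  assumes "is_dpath E xs u v" "i < length xs"
  shows "is_dpath E (drop i xs) (xs ! i) v"
  using assms unfolding is_dpath_def by (auto simp: hd_drop_conv_nth)

lemma dpath_split:
  assumes "is_dpath E xs u v" "w \<in> set xs"
  obtains ys zs where "is_dpath E ys u w" "is_dpath E zs w v" "xs = ys @ tl zs"
proof -
  obtain i where i: "i < length xs" "xs ! i = w" using assms(2) by (metis in_set_conv_nth)
  have "xs = take (Suc i) xs @ tl (drop i xs)"
    using i(1) by (metis Cons_nth_drop_Suc append_take_drop_id list.sel(3) take_Suc_conv_app_nth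
        append.assoc append_Cons append_Nil)
  with that dpath_take[OF assms(1) i(1)] dpath_drop[OF assms(1) i(1)] i(2) show ?thesis
    by metis
qed

lemma dpath_mem_reach: "is_dpath E xs u v \<Longrightarrow> w \<in> set xs \<Longrightarrow> reach E u w \<and> reach E w v"
  by (metis dpath_reach dpath_split)

lemma dpath_self: "acyclic E \<Longrightarrow> is_dpath E xs u u \<Longrightarrow> xs = [u]"
  by (metis is_dpathD dpath_distinct distinct.simps(2) hd_Cons_tl last.simps last_in_set)

lemma dpath_second_vertex:
  assumes "is_dpath E xs u v" "u \<noteq> v"
  shows "1 < length xs \<and> (u, xs ! 1) \<in> E \<and> xs = u # drop 1 xs \<and>
    is_dpath E (drop 1 xs) (xs ! 1) v"
proof -
  have xs: "xs \<noteq> []" "hd xs = u" "last xs = v" using is_dpathD[OF assms(1)] by auto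
  then obtain y ys where "xs = u # y # ys"
    using assms(2) by (metis hd_Cons_tl last_ConsL list.exhaust)
  with assms(1) show ?thesis using dpath_drop[OF assms(1), of 1] unfolding is_dpath_def by force
qed

lemma dpath_last_edge:
  assumes "is_dpath E xs s t" "s \<noteq> t"
  obtains p zs where "(p, t) \<in> E" "is_dpath E zs s p" "xs = zs @ [t]"
proof -
  obtain zs where xs: "xs = zs @ [t]" "zs \<noteq> []"
    using is_dpathD[OF assms(1)] assms(2) by (metis append_butlast_last_id last_snoc list.collapse
        snoc_eq_iff_butlast hd_append2 list.sel(1) append_Nil)
  define i where "i = length zs - 1"
  have i: "i < length xs" "xs ! i = last zs" "xs ! Suc i = t"
    using xs by (auto simp: i_def last_conv_nth nth_append)
  have "(last zs, t) \<in> E"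
    using assms(1) i xs unfolding is_dpath_def by (metis Suc_diff_1 i_def length_append_singleton
        length_greater_0_conv lessI)
  moreover have "is_dpath E zs s (last zs)"
    using dpath_take[OF assms(1) i(1)] xs i by (simp add: i_def)
  ultimately show ?thesis using that xs(1) by blast
qed

lemma paths_V_iff: "x \<in> paths_V E u v \<longleftrightarrow> (\<exists>xs. is_dpath E xs u v \<and> x \<in> set xs)"
  unfolding paths_V_def by auto

lemma paths_E_iff: "e \<in> paths_E E u v \<longleftrightarrow> (\<exists>xs. is_dpath E xs u v \<and> e \<in> path_edges xs)"
  unfolding paths_E_def by auto

lemma ex_last_index:
  fixes P :: "nat \<Rightarrow> bool"
  assumes "P 0"
  shows "\<exists>i \<le> k. P i \<and> (\<forall>l. i < l \<and> l \<le> k \<longrightarrow> \<not> P l)"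
proof (induction k)
  case (Suc k)
  then show ?case by (cases "P (Suc k)") (auto simp: le_Suc_eq)
qed (use assms in auto)

lemma ex_first_index:
  fixes P :: "nat \<Rightarrow> bool"
  assumes "i < m" "P m"
  shows "\<exists>k. i < k \<and> k \<le> m \<and> P k \<and> (\<forall>l. i < l \<and> l < k \<longrightarrow> \<not> P l)"
proof -
  define k where "k = (LEAST k. i < k \<and> P k)"
  have "i < k \<and> P k" using LeastI[of "\<lambda>k. i < k \<and> P k" m] assms k_def by blast
  moreover have "k \<le> m" using Least_le[of "\<lambda>k. i < k \<and> P k" m] assms k_def by blast
  moreover have "\<forall>l. i < l \<and> l < k \<longrightarrow> \<not> P l"
    using not_less_Least[of _ "\<lambda>k. i < k \<and> P k"] k_def by blast
  ultimately show ?thesis by blast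
qed

lemma length_ge_2_if_hd_neq_last: "xs \<noteq> [] \<Longrightarrow> hd xs \<noteq> last xs \<Longrightarrow> length xs \<ge> 2"
  by (cases xs) (auto split: if_splits simp: Suc_le_eq)

lemma hd_butlast_tl_last: "length xs \<ge> 2 \<Longrightarrow> xs = hd xs # butlast (tl xs) @ [last xs]"
  by (cases xs) auto

lemma in_butlast_tl_conv_nth:
  assumes "x \<in> set (butlast (tl xs))"
  shows "\<exists>l. 0 < l \<and> Suc l < length xs \<and> x = xs ! l"
proof -
  obtain m where m: "m < length (butlast (tl xs))" "butlast (tl xs) ! m = x"
    using assms by (metis in_set_conv_nth)
  then have "x = xs ! Suc m" by (simp add: nth_butlast nth_tl)
  then show ?thesis using m by (intro exI[of _ "Suc m"]) auto
qed

lemma drop_take_nth: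
  assumes "i \<le> k" "k < length R"
  shows "drop i (take (Suc k) R) \<noteq> []" "hd (drop i (take (Suc k) R)) = R ! i"
    "last (drop i (take (Suc k) R)) = R ! k" "length (drop i (take (Suc k) R)) = Suc k - i"
proof -
  have "take (Suc k) R = take k R @ [R ! k]" using assms(2) by (rule take_Suc_conv_app_nth)
  then show "last (drop i (take (Suc k) R)) = R ! k" using assms by (simp add: last_drop)
qed (use assms in \<open>auto simp: hd_drop_conv_nth\<close>)

lemma in_set_drop_take_conv_nth:
  assumes "x \<in> set (drop i (take (Suc k) R))" "k < length R"
  shows "\<exists>l. i \<le> l \<and> l \<le> k \<and> x = R ! l"
proof -
  obtain m where m: "m < length (drop i (take (Suc k) R))" "drop i (take (Suc k) R) ! m = x"
    using assms(1) by (metis in_set_conv_nth)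
  have "m < Suc k - i" using m(1) assms(2) by simp
  moreover then have "drop i (take (Suc k) R) ! m = R ! (i + m)" using assms(2) by simp
  ultimately show ?thesis using m(2) by (intro exI[of _ "i + m"]) auto
qed

lemma nth_in_take_iff:
  assumes "distinct xs" "k < length xs"
  shows "xs ! k \<in> set (take d xs) \<longleftrightarrow> k < d"
proof
  assume "k < d" then show "xs ! k \<in> set (take d xs)" using assms(2)
    by (metis in_set_conv_nth length_take min_less_iff_conj nth_take)
next
  assume a: "xs ! k \<in> set (take d xs)"
  then obtain l where l: "l < length (take d xs)" "take d xs ! l = xs ! k"
    by (metis in_set_conv_nth)
  then have "xs ! l = xs ! k" "l < d" "l < length xs" by auto
  then have "l = k" using assms nth_eq_iff_index_eq by metis
  then show "k < d" using \<open>l < d\<close> by simp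
qed

lemma nth_in_drop_iff:
  assumes "distinct xs" "k < length xs"
  shows "xs ! k \<in> set (drop d xs) \<longleftrightarrow> d \<le> k"
proof
  assume dk: "d \<le> k"
  have "k - d < length (drop d xs)" using dk assms(2) by simp
  moreover have "drop d xs ! (k - d) = xs ! k" using dk assms(2) by simp
  ultimately show "xs ! k \<in> set (drop d xs)" by (metis nth_mem)
next
  assume a: "xs ! k \<in> set (drop d xs)"
  then obtain l where l: "l < length (drop d xs)" "drop d xs ! l = xs ! k"
    by (metis in_set_conv_nth)
  then have "xs ! (d + l) = xs ! k" "d + l < length xs" by auto
  then have "d + l = k" using assms nth_eq_iff_index_eq by metis
  then show "d \<le> k" by simp
qed

lemma dpath_segment_between:
  assumes R: "is_dpath E R a b" and "a \<in> S" "b \<in> T" "a \<notin> T"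
  obtains c z Rz where "is_dpath E Rz c z" "c \<in> S" "z \<in> T" "set Rz \<subseteq> set R"
    "\<forall>x \<in> set Rz. x \<noteq> c \<longrightarrow> x \<noteq> z \<longrightarrow> x \<notin> S \<and> x \<notin> T"
proof -
  have Rh: "R \<noteq> []" "R ! 0 = a" "R ! (length R - 1) = b"
    using is_dpathD[OF R] by (auto simp: hd_conv_nth last_conv_nth)
  have pos: "0 < length R - 1"
    using Rh assms(3,4) by (metis gr0I)
  obtain k where k: "0 < k" "k \<le> length R - 1" "R ! k \<in> T" "\<forall>l. 0 < l \<and> l < k \<longrightarrow> R ! l \<notin> T"
    using ex_first_index[of 0 "length R - 1" "\<lambda>l. R ! l \<in> T", OF pos] Rh assms(3) by blast
  have kl: "k < length R" using k(2) pos by simp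
  obtain i where i: "i \<le> k" "R ! i \<in> S" "\<forall>l. i < l \<and> l \<le> k \<longrightarrow> R ! l \<notin> S"
    using ex_last_index[of "\<lambda>l. R ! l \<in> S" k] Rh assms(2) by blast
  define Rz where "Rz = drop i (take (Suc k) R)"
  have "is_dpath E (take (Suc k) R) a (R ! k)" using dpath_take[OF R kl] .
  then have "is_dpath E Rz (R ! i) (R ! k)"
    using dpath_drop[of E "take (Suc k) R" a "R ! k" i] i(1) kl unfolding Rz_def by simp
  moreover have "set Rz \<subseteq> set R"
    unfolding Rz_def by (meson order_trans set_drop_subset set_take_subset)
  moreover have "x \<notin> S \<and> x \<notin> T" if x: "x \<in> set Rz" "x \<noteq> R ! i" "x \<noteq> R ! k" for x
  proof -
    obtain l where l: "i \<le> l" "l \<le> k" "x = R ! l"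
      using in_set_drop_take_conv_nth[OF x(1)[unfolded Rz_def] kl] by blast
    then have "i < l" "l < k" using x(2,3) by (auto simp: le_less)
    then show ?thesis using i(3) k(4) l(3) by auto
  qed
  ultimately show ?thesis using that[of Rz "R ! i" "R ! k"] i(2) k(3) by blast
qed

lemma first_meeting:
  assumes "acyclic E" and P1: "is_dpath E P1 u v" and P2: "is_dpath E P2 u v" and "u \<noteq> v"
  obtains y A B where "is_dpath E A u y" "is_dpath E B u y" "set A \<inter> set B \<subseteq> {u, y}" "y \<noteq> u"
    "A ! 1 = P1 ! 1" "B ! 1 = P2 ! 1" "reach E y v"
proof -
  have d1: "distinct P1" "distinct P2"
    using dpath_distinct[OF assms(1) P1] dpath_distinct[OF assms(1) P2] .
  have l1: "0 < length P1 - 1" using dpath_second_vertex[OF P1 assms(4)] by simp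
  have "P1 ! (length P1 - 1) \<in> set P2"
    using is_dpathD[OF P1] last_in_dpath[OF P2] last_conv_nth[of P1] by simp
  then obtain i where i: "0 < i" "i \<le> length P1 - 1" "P1 ! i \<in> set P2"
    "\<forall>l. 0 < l \<and> l < i \<longrightarrow> P1 ! l \<notin> set P2"
    using ex_first_index[of 0 "length P1 - 1" "\<lambda>l. P1 ! l \<in> set P2", OF l1] by blast
  have il: "i < length P1" using i(2) l1 by simp
  define y where "y = P1 ! i"
  obtain j where j: "j < length P2" "P2 ! j = y" using i(3) y_def by (metis in_set_conv_nth)
  have P0: "P1 ! 0 = u" "P2 ! 0 = u"
    using is_dpathD[OF P1] is_dpathD[OF P2] by (auto simp: hd_conv_nth)
  have yu: "y \<noteq> u"
    using nth_eq_iff_index_eq[OF d1(1) il, of 0] i(1) P0 il is_dpathD[OF P1] unfolding y_def by auto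
  then have j0: "0 < j" using j P0 by (cases j) auto
  define A where "A = take (Suc i) P1"
  define B where "B = take (Suc j) P2"
  have A: "is_dpath E A u y" using dpath_take[OF P1 il] A_def y_def is_dpathD[OF P1] by simp
  have B: "is_dpath E B u y" using dpath_take[OF P2 j(1)] B_def j(2) is_dpathD[OF P2] by simp
  have AB: "set A \<inter> set B \<subseteq> {u, y}"
  proof
    fix x assume x: "x \<in> set A \<inter> set B"
    then obtain l where l: "l \<le> i" "x = P1 ! l"
      unfolding A_def by (metis IntD1 in_set_conv_nth length_take min_less_iff_conj nth_take
          less_Suc_eq_le)
    have "x \<in> set P2" using x B_def by (meson IntD2 in_set_takeD)
    then have "l = 0 \<or> l = i" using i(4) l by (metis le_neq_implies_less not_gr0)
    then show "x \<in> {u, y}" using l P0 y_def by auto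
  qed
  have "A ! 1 = P1 ! 1" "B ! 1 = P2 ! 1" using A_def B_def i(1) j0 by simp_all
  moreover have "reach E y v" using dpath_mem_reach[OF P1] il y_def by simp
  ultimately show ?thesis using that A B AB yu by blast
qed

lemma path_edges_subset_first_path:
  assumes "path_edges R \<subseteq> path_edges A \<union> path_edges B" "R \<noteq> []" "hd R \<in> set A" "hd R \<noteq> a"
    "distinct A" "distinct B" "hd A = a" "last B = b" "set A \<inter> set B \<subseteq> {a, b}"
  shows "path_edges R \<subseteq> path_edges A"
  using assms(1-4)
proof (induction R rule: induct_list012)
  case 1 then show ?case by simp
next
  case (2 x) then show ?case by simp
next
  case (3 x y zs)
  have xy: "(x, y) \<in> path_edges A \<union> path_edges B" using "3.prems"(1) by simp
  have xA: "x \<in> set A" "x \<noteq> a" using "3.prems" by auto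
  have xyA: "(x, y) \<in> path_edges A"
  proof (rule ccontr)
    assume "(x, y) \<notin> path_edges A"
    then have "(x, y) \<in> path_edges B" using xy by blast
    then have "x \<in> set B" "x \<noteq> last B"
      using path_edges_memD path_edges_fst_neq_last[OF assms(6)] by metis+
    then show False using xA assms(8,9) by blast
  qed
  have yA: "y \<in> set A" "y \<noteq> a"
    using path_edges_memD[OF xyA] path_edges_snd_neq_hd[OF assms(5) xyA] assms(7) by auto
  have "path_edges (y # zs) \<subseteq> path_edges A" using "3.IH"(2) "3.prems"(1) yA by simp
  then show ?case using xyA by simp
qed

section \<open>Cut vertices and branching paths\<close>

definition cut_vertex :: "('a \<times> 'a) set \<Rightarrow> 'a \<Rightarrow> 'a \<Rightarrow> 'a \<Rightarrow> bool" where
  "cut_vertex E a w b \<longleftrightarrow> reach E a w \<and> reach E w b \<and> (\<forall>xs. is_dpath E xs a b \<longrightarrow> w \<in> set xs)"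

definition unique_dpath :: "('a \<times> 'a) set \<Rightarrow> 'a \<Rightarrow> 'a \<Rightarrow> bool" where
  "unique_dpath E a b \<longleftrightarrow> (\<exists>!xs. is_dpath E xs a b)"

lemma cut_vertexD: "cut_vertex E a w b \<Longrightarrow> reach E a w \<and> reach E w b"
  unfolding cut_vertex_def by auto

lemma cut_vertex_refl: "reach E a b \<Longrightarrow> cut_vertex E a a b"
  unfolding cut_vertex_def reach_def by (auto dest: hd_in_dpath)

lemma unique_dpath_refl: "acyclic E \<Longrightarrow> unique_dpath E a a"
  unfolding unique_dpath_def by (metis dpath_self is_dpath_singleton)

lemma Union_dpaths_cut_vertex:
  assumes cut: "cut_vertex E a w b"
    and f: "\<And>xs ys x y z. is_dpath E xs x y \<Longrightarrow> is_dpath E ys y z \<Longrightarrow> f (xs @ tl ys) = f xs \<union> f ys"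
  shows "\<Union> {f xs | xs. is_dpath E xs a b} =
           \<Union> {f xs | xs. is_dpath E xs a w} \<union> \<Union> {f xs | xs. is_dpath E xs w b}"
    (is "?ab = ?aw \<union> ?wb")
proof (intro equalityI subsetI)
  fix e assume "e \<in> ?ab"
  then obtain xs where xs: "is_dpath E xs a b" "e \<in> f xs" by blast
  have "w \<in> set xs" using cut xs(1) unfolding cut_vertex_def by blast
  then obtain ys zs where ys: "is_dpath E ys a w" and zs: "is_dpath E zs w b" and "xs = ys @ tl zs"
    using dpath_split[OF xs(1)] by blast
  then have "e \<in> f ys \<union> f zs" using xs(2) f[OF ys zs] by simp
  then show "e \<in> ?aw \<union> ?wb" using ys zs by blast
next
  obtain p where p: "is_dpath E p a w" using cut reach_imp_dpath unfolding cut_vertex_def by metis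
  obtain q where q: "is_dpath E q w b" using cut reach_imp_dpath unfolding cut_vertex_def by metis
  fix e assume "e \<in> ?aw \<union> ?wb"
  then consider ys where "is_dpath E ys a w" "e \<in> f ys" | zs where "is_dpath E zs w b" "e \<in> f zs"
    by blast
  then show "e \<in> ?ab"
  proof cases
    case 1
    then show ?thesis using dpath_append[OF 1(1) q] f[OF 1(1) q] by blast
  next
    case 2
    then show ?thesis using dpath_append[OF p 2(1)] f[OF p 2(1)] by blast
  qed
qed

lemma paths_cut_vertex:
  assumes "cut_vertex E a w b"
  shows "paths_V E a b = paths_V E a w \<union> paths_V E w b"
    and "paths_E E a b = paths_E E a w \<union> paths_E E w b"
  unfolding paths_V_def paths_E_def
  by (rule Union_dpaths_cut_vertex[OF assms], erule (1) set_dpath_append path_edges_dpath_append)+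

lemma cut_vertex_restrict_right:
  assumes "acyclic E" "cut_vertex E a w b" "reach E w x" "reach E x b"
  shows "cut_vertex E a w x"
  unfolding cut_vertex_def
proof (intro conjI allI impI)
  show "reach E w x" by fact
  show "reach E a w" using assms(2) unfolding cut_vertex_def by auto
  fix xs assume xs: "is_dpath E xs a x"
  obtain ys where ys: "is_dpath E ys x b" using assms(4) reach_imp_dpath by metis
  have "w \<in> set (xs @ tl ys)" using assms(2) dpath_append[OF xs ys] unfolding cut_vertex_def by auto
  then have "w \<in> set xs \<or> w \<in> set ys" using set_dpath_append[OF xs ys] by auto
  then show "w \<in> set xs"
  proof (rule disjE)
    assume "w \<in> set ys"
    then have "reach E x w" using dpath_mem_reach[OF ys] by auto
    then have "w = x" using reach_antisym[OF assms(1)] assms(3) by auto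
    then show ?thesis using last_in_dpath[OF xs] by simp
  qed simp
qed

lemma cut_vertex_trans_right:
  assumes "cut_vertex E a w b" "cut_vertex E w c b"
  shows "cut_vertex E a c b"
  unfolding cut_vertex_def
proof (intro conjI allI impI)
  show "reach E a c" using assms unfolding cut_vertex_def using reach_trans by metis
  show "reach E c b" using assms unfolding cut_vertex_def by auto
  fix xs assume xs: "is_dpath E xs a b"
  then have "w \<in> set xs" using assms(1) unfolding cut_vertex_def by auto
  then obtain p q where pq: "is_dpath E p a w" "is_dpath E q w b" "xs = p @ tl q"
    using dpath_split[OF xs] by metis
  then have "c \<in> set q" using assms(2) unfolding cut_vertex_def by auto
  then show "c \<in> set xs" using set_dpath_append[OF pq(1,2)] pq(3) by auto
qed

lemma unique_dpath_trans:
  assumes "unique_dpath E a w" "unique_dpath E w b" "cut_vertex E a w b"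
  shows "unique_dpath E a b"
proof -
  obtain p where p: "is_dpath E p a w" "\<And>p'. is_dpath E p' a w \<Longrightarrow> p' = p"
    using assms(1) unfolding unique_dpath_def by metis
  obtain q where q: "is_dpath E q w b" "\<And>q'. is_dpath E q' w b \<Longrightarrow> q' = q"
    using assms(2) unfolding unique_dpath_def by metis
  show ?thesis unfolding unique_dpath_def
  proof (rule ex1I[of _ "p @ tl q"])
    show "is_dpath E (p @ tl q) a b" using dpath_append p q by metis
    fix xs assume xs: "is_dpath E xs a b"
    then have "w \<in> set xs" using assms(3) unfolding cut_vertex_def by auto
    then show "xs = p @ tl q" using dpath_split[OF xs] p q by metis
  qed
qed

lemma is_sbp_parent_reach: "is_sbp V E s t \<Longrightarrow> p \<in> parents E t \<Longrightarrow> reach E s p"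
  unfolding is_sbp_def is_lca_def by blast

lemma is_sbp_ex_parent: "is_sbp V E s t \<Longrightarrow> \<exists>p. p \<in> parents E t"
  unfolding is_sbp_def is_sink_def by (metis card.empty ex_in_conv zero_neq_numeral)

lemma is_sbp_source_neq_sink:
  assumes "acyclic E" "is_sbp V E s t"
  shows "s \<noteq> t"
proof -
  obtain p where p: "p \<in> parents E t" using is_sbp_ex_parent[OF assms(2)] ..
  then show ?thesis using is_sbp_parent_reach[OF assms(2) p] acyclic_edge_not_reach[OF assms(1)]
    unfolding parents_def by blast
qed

lemma dpath_snoc_parent:
  "p \<in> parents E t \<Longrightarrow> is_dpath E zs s p \<Longrightarrow> is_dpath E (zs @ [t]) s t"
  unfolding parents_def by (simp add: dpath_snoc)

lemma paths_V_sbp: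
  assumes "acyclic E" "is_sbp V E s t"
  shows "paths_V E s t = sbp_V E s t"
proof (intro equalityI subsetI)
  fix x assume "x \<in> paths_V E s t"
  then obtain xs where xs: "is_dpath E xs s t" "x \<in> set xs" unfolding paths_V_iff by blast
  obtain p zs where "(p, t) \<in> E" "is_dpath E zs s p" "xs = zs @ [t]"
    using dpath_last_edge[OF xs(1) is_sbp_source_neq_sink[OF assms]] .
  then show "x \<in> sbp_V E s t"
    using xs(2) by (auto simp: sbp_V_def parents_def paths_V_iff)
next
  fix x assume "x \<in> sbp_V E s t"
  then consider "x = t" | p where "p \<in> parents E t" "x \<in> paths_V E s p"
    unfolding sbp_V_def by blast
  then obtain p zs where p: "p \<in> parents E t" "is_dpath E zs s p" and "x = t \<or> x \<in> set zs"
  proof cases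
    case 1
    obtain p where p: "p \<in> parents E t" using is_sbp_ex_parent[OF assms(2)] ..
    then show ?thesis using that 1 reach_imp_dpath[OF is_sbp_parent_reach[OF assms(2) p]] by blast
  next
    case 2
    then show ?thesis using that unfolding paths_V_iff by blast
  qed
  then show "x \<in> paths_V E s t" using dpath_snoc_parent[OF p] unfolding paths_V_iff by force
qed

lemma paths_E_sbp:
  assumes "acyclic E" "is_sbp V E s t"
  shows "paths_E E s t = sbp_E E s t"
proof (intro equalityI subsetI)
  fix e assume "e \<in> paths_E E s t"
  then obtain xs where xs: "is_dpath E xs s t" "e \<in> path_edges xs" unfolding paths_E_iff by blast
  obtain p zs where p: "(p, t) \<in> E" and zs: "is_dpath E zs s p" and "xs = zs @ [t]"
    using dpath_last_edge[OF xs(1) is_sbp_source_neq_sink[OF assms]] .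
  then have "e \<in> insert (p, t) (paths_E E s p)"
    using xs(2) path_edges_snoc[of zs t] is_dpathD[OF zs] zs by (auto simp: paths_E_iff)
  then show "e \<in> sbp_E E s t" using p unfolding sbp_E_def parents_def by blast
next
  fix e assume "e \<in> sbp_E E s t"
  then obtain p where p: "p \<in> parents E t" "e = (p, t) \<or> e \<in> paths_E E s p"
    unfolding sbp_E_def by blast
  obtain zs where zs: "is_dpath E zs s p" "e = (p, t) \<or> e \<in> path_edges zs"
    using p(2) reach_imp_dpath[OF is_sbp_parent_reach[OF assms(2) p(1)]]
      unfolding paths_E_iff by blast
  then have "e \<in> path_edges (zs @ [t])" using path_edges_snoc[of zs t] is_dpathD[OF zs(1)] by auto
  then show "e \<in> paths_E E s t"
    using dpath_snoc_parent[OF p(1) zs(1)] unfolding paths_E_iff by blast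
qed

text \<open>The step rule prepends \<open>x \<rightarrow> s \<rightrightarrows> t\<close>; the two cut vertices force every \<open>x\<close>--\<open>y\<close> path
  through \<open>s\<close> and then \<open>t\<close>, so the paths from \<open>x\<close> to \<open>y\<close> are glued from those of the pieces.\<close>

inductive branching_path :: "'a set \<Rightarrow> ('a \<times> 'a) set \<Rightarrow> 'a \<Rightarrow> 'a \<Rightarrow> bool" for V E where
  unique: "unique_dpath E x y \<Longrightarrow> branching_path V E x y"
| step: "unique_dpath E x s \<Longrightarrow> is_sbp V E s t \<Longrightarrow> branching_path V E t y \<Longrightarrow>
    cut_vertex E x s y \<Longrightarrow> cut_vertex E s t y \<Longrightarrow> branching_path V E x y"

lemma branching_path_unique_prefix:
  assumes "acyclic E" "unique_dpath E x w" "branching_path V E w y" "cut_vertex E x w y"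
  shows "branching_path V E x y"
  using assms(3)
proof cases
  case unique
  then show ?thesis using unique_dpath_trans assms(2,4) branching_path.unique by metis
next
  case (step s t)
  have "cut_vertex E x w s"
    using cut_vertex_restrict_right[OF assms(1,4)] step(4,5) cut_vertexD reach_trans by metis
  then have "unique_dpath E x s" using unique_dpath_trans[OF assms(2) step(1)] by blast
  moreover have "cut_vertex E x s y" using cut_vertex_trans_right[OF assms(4) step(4)] .
  ultimately show ?thesis using branching_path.step step(2,3,5) by metis
qed

lemma atLeastAtMost_Suc_shift: "k \<le> Suc m \<Longrightarrow> {k..Suc m} = insert k (Suc ` {k..m})"
  by (auto simp: image_iff)

definition bp_decomposition ::
  "'a set \<Rightarrow> ('a \<times> 'a) set \<Rightarrow> 'a \<Rightarrow> 'a \<Rightarrow> nat \<Rightarrow> (nat \<Rightarrow> 'a) \<Rightarrow> (nat \<Rightarrow> 'a) \<Rightarrow> bool" where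
  "bp_decomposition V E u v m s t \<longleftrightarrow>
     (let a = (\<lambda>j. if j = 0 then u else t j);
          b = (\<lambda>j. if j = m then v else s (Suc j))
      in (\<forall>j \<in> {1..m}. is_sbp V E (s j) (t j)) \<and>
         (\<forall>j \<in> {0..m}. \<exists>!xs. is_dpath E xs (a j) (b j)) \<and>
         paths_V E u v =
           (\<Union>j \<in> {0..m}. paths_V E (a j) (b j)) \<union> (\<Union>j \<in> {1..m}. sbp_V E (s j) (t j)) \<and>
         paths_E E u v =
           (\<Union>j \<in> {0..m}. paths_E E (a j) (b j)) \<union> (\<Union>j \<in> {1..m}. sbp_E E (s j) (t j)))"

lemma bp_decomposition_unique: "unique_dpath E u v \<Longrightarrow> bp_decomposition V E u v 0 s t"
  unfolding bp_decomposition_def unique_dpath_def by simp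

lemma bp_decomposition_Cons:
  assumes "acyclic E" "unique_dpath E x s" "is_sbp V E s t"
    and "cut_vertex E x s y" "cut_vertex E s t y" and dec: "bp_decomposition V E t y m s' t'"
  shows "bp_decomposition V E x y (Suc m) (\<lambda>j. if j = 1 then s else s' (j - 1))
           (\<lambda>j. if j = 1 then t else t' (j - 1))"
proof -
  define a' where "a' = (\<lambda>j. if j = 0 then t else t' j)"
  define b' where "b' = (\<lambda>j. if j = m then y else s' (Suc j))"
  have IH: "\<forall>j \<in> {1..m}. is_sbp V E (s' j) (t' j)"
    "\<forall>j \<in> {0..m}. \<exists>!xs. is_dpath E xs (a' j) (b' j)"
    "paths_V E t y =
      (\<Union>j \<in> {0..m}. paths_V E (a' j) (b' j)) \<union> (\<Union>j \<in> {1..m}. sbp_V E (s' j) (t' j))"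
    "paths_E E t y =
      (\<Union>j \<in> {0..m}. paths_E E (a' j) (b' j)) \<union> (\<Union>j \<in> {1..m}. sbp_E E (s' j) (t' j))"
    using dec unfolding bp_decomposition_def a'_def b'_def Let_def by auto
  define s2 where "s2 = (\<lambda>j. if j = 1 then s else s' (j - 1))"
  define t2 where "t2 = (\<lambda>j. if j = 1 then t else t' (j - 1))"
  define a2 where "a2 = (\<lambda>j. if j = 0 then x else t2 j)"
  define b2 where "b2 = (\<lambda>j. if j = Suc m then y else s2 (Suc j))"
  have a2: "a2 0 = x" "a2 (Suc j) = a' j" for j unfolding a2_def t2_def a'_def by auto
  have b2: "b2 0 = s" "b2 (Suc j) = b' j" for j unfolding b2_def s2_def b'_def by auto
  have st2: "s2 1 = s" "t2 1 = t" "j \<ge> 1 \<Longrightarrow> s2 (Suc j) = s' j \<and> t2 (Suc j) = t' j" for j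
    unfolding s2_def t2_def by auto
  have I0: "{0..Suc m} = insert 0 (Suc ` {0..m})" and I1: "{1..Suc m} = insert 1 (Suc ` {1..m})"
    by (rule atLeastAtMost_Suc_shift; simp)+
  have split: "paths_V E x y = paths_V E x s \<union> sbp_V E s t \<union> paths_V E t y"
    "paths_E E x y = paths_E E x s \<union> sbp_E E s t \<union> paths_E E t y"
    using paths_cut_vertex[OF assms(4)] paths_cut_vertex[OF assms(5)]
      paths_V_sbp[OF assms(1,3)] paths_E_sbp[OF assms(1,3)] by auto
  have sbps: "\<forall>j \<in> {1..Suc m}. is_sbp V E (s2 j) (t2 j)"
  proof
    fix j assume "j \<in> {1..Suc m}"
    then consider "j = 1" | k where "k \<in> {1..m}" "j = Suc k" unfolding I1 by blast
    then show "is_sbp V E (s2 j) (t2 j)" using assms(3) IH(1) st2 by cases auto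
  qed
  have unique: "\<forall>j \<in> {0..Suc m}. \<exists>!xs. is_dpath E xs (a2 j) (b2 j)"
  proof
    fix j assume "j \<in> {0..Suc m}"
    then consider "j = 0" | k where "k \<in> {0..m}" "j = Suc k" unfolding I0 by blast
    then show "\<exists>!xs. is_dpath E xs (a2 j) (b2 j)"
      using assms(2) IH(2) unfolding unique_dpath_def by cases (auto simp only: a2 b2)
  qed
  have "(\<Union>j \<in> {0..Suc m}. paths_V E (a2 j) (b2 j)) =
      paths_V E x s \<union> (\<Union>j \<in> {0..m}. paths_V E (a' j) (b' j))"
    "(\<Union>j \<in> {0..Suc m}. paths_E E (a2 j) (b2 j)) =
      paths_E E x s \<union> (\<Union>j \<in> {0..m}. paths_E E (a' j) (b' j))"
    unfolding I0 UN_insert image_image a2 b2 by (rule refl)+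
  moreover have "(\<Union>j \<in> {1..Suc m}. sbp_V E (s2 j) (t2 j)) =
      sbp_V E s t \<union> (\<Union>j \<in> {1..m}. sbp_V E (s' j) (t' j))"
    "(\<Union>j \<in> {1..Suc m}. sbp_E E (s2 j) (t2 j)) =
      sbp_E E s t \<union> (\<Union>j \<in> {1..m}. sbp_E E (s' j) (t' j))"
    unfolding I1 UN_insert image_image using st2 by auto
  ultimately have paths:
    "paths_V E x y =
      (\<Union>j \<in> {0..Suc m}. paths_V E (a2 j) (b2 j)) \<union> (\<Union>j \<in> {1..Suc m}. sbp_V E (s2 j) (t2 j))"
    "paths_E E x y =
      (\<Union>j \<in> {0..Suc m}. paths_E E (a2 j) (b2 j)) \<union> (\<Union>j \<in> {1..Suc m}. sbp_E E (s2 j) (t2 j))"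
    using split IH(3,4) by auto
  show ?thesis
    using sbps unique paths unfolding a2_def b2_def
    unfolding bp_decomposition_def Let_def s2_def[symmetric] t2_def[symmetric]
    by (intro conjI) assumption+
qed

lemma branching_path_bp_decomposition:
  assumes "branching_path V E x y" "acyclic E"
  shows "\<exists>m s t. bp_decomposition V E x y m s t"
  using assms(1)
proof (induction rule: branching_path.induct)
  case (unique x y)
  then show ?case using bp_decomposition_unique by (intro exI) fast
next
  case (step x s t y)
  then show ?case using bp_decomposition_Cons[OF assms(2)] by blast
qed

section \<open>Undirected walks and cycles\<close>

definition undir_adj :: "('a \<times> 'a) set \<Rightarrow> 'a \<Rightarrow> 'a \<Rightarrow> bool" where
  "undir_adj F x y \<longleftrightarrow> (x, y) \<in> F \<or> (y, x) \<in> F"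

text \<open>\<open>cyclic_walk F cs\<close> and \<open>cycle_edges cs\<close> are the two halves of the definition of
  \<open>undir_cycles\<close>: the closed undirected walk through \<open>cs\<close> and its set of undirected edges.\<close>

definition cyclic_walk :: "('a \<times> 'a) set \<Rightarrow> 'a list \<Rightarrow> bool" where
  "cyclic_walk F cs \<longleftrightarrow> (\<forall>i < length cs. undir_adj F (cs ! i) (cs ! (Suc i mod length cs)))"

definition cycle_edges :: "'a list \<Rightarrow> 'a set set" where
  "cycle_edges cs = {{cs ! i, cs ! (Suc i mod length cs)} | i. i < length cs}"

lemma undir_adj_commute: "undir_adj F x y \<longleftrightarrow> undir_adj F y x"
  by (auto simp: undir_adj_def)

lemma undir_adj_mono: "F \<subseteq> G \<Longrightarrow> undir_adj F x y \<Longrightarrow> undir_adj G x y"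
  by (auto simp: undir_adj_def)

lemma successively_undir_adj_rev [simp]:
  "successively (undir_adj F) (rev xs) \<longleftrightarrow> successively (undir_adj F) xs"
proof -
  have "(\<lambda>x y. undir_adj F y x) = undir_adj F" by (auto simp: undir_adj_def fun_eq_iff)
  then show ?thesis by (simp only: successively_rev)
qed

lemma successively_undir_adj_mono:
  "F \<subseteq> G \<Longrightarrow> successively (undir_adj F) xs \<Longrightarrow> successively (undir_adj G) xs"
  using successively_mono undir_adj_mono by metis

lemma successively_join:
  assumes "successively P xs" "successively P ys" "xs \<noteq> []" "last xs = hd ys"
  shows "successively P (xs @ tl ys)"
  using assms by (cases ys) (auto simp: successively_append_iff successively_Cons)

lemma successively_take: "successively P xs \<Longrightarrow> successively P (take k xs)"
  unfolding successively_conv_nth by auto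

lemma successively_drop: "successively P xs \<Longrightarrow> successively P (drop k xs)"
  unfolding successively_conv_nth by (auto simp: add.commute)

lemma dpath_undir_walk: "is_dpath E xs u v \<Longrightarrow> successively (undir_adj E) xs"
  unfolding is_dpath_iff_successively
  using successively_mono[of "\<lambda>x y. (x, y) \<in> E" xs "undir_adj E"] by (auto simp: undir_adj_def)

lemma path_edges_undir_walk: "successively (undir_adj (path_edges xs)) xs"
  using successively_mono[OF successively_path_edges, of xs "undir_adj (path_edges xs)"]
  by (auto simp: undir_adj_def)

lemma cyclic_walk_iff_successively:
  assumes "cs \<noteq> []"
  shows "cyclic_walk F cs \<longleftrightarrow> successively (undir_adj F) (cs @ [hd cs])"
proof -
  have "(cs @ [hd cs]) ! i = cs ! i" "(cs @ [hd cs]) ! Suc i = cs ! (Suc i mod length cs)"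
    if "i < length cs" for i
    using that assms by (auto simp: nth_append hd_conv_nth mod_Suc)
  then show ?thesis unfolding cyclic_walk_def successively_conv_nth by auto
qed

lemma cyclic_walk_rotate:
  assumes "cyclic_walk F cs"
  shows "cyclic_walk F (rotate k cs)"
  unfolding cyclic_walk_def
proof (intro allI impI)
  fix i assume i: "i < length (rotate k cs)"
  define n where "n = length cs"
  have n: "i < n" "0 < n" using i n_def by auto
  have r1: "rotate k cs ! i = cs ! ((k + i) mod n)" using n by (simp add: nth_rotate n_def)
  have "Suc i mod n < n" using n by simp
  then have "rotate k cs ! (Suc i mod n) = cs ! ((k + Suc i mod n) mod n)"
    by (simp add: nth_rotate n_def)
  also have "(k + Suc i mod n) mod n = Suc ((k + i) mod n) mod n"
    by (simp add: mod_add_right_eq mod_Suc_eq)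
  finally have r2: "rotate k cs ! (Suc i mod n) = cs ! (Suc ((k + i) mod n) mod n)" .
  have "(k + i) mod n < n" using n by simp
  then have "undir_adj F (cs ! ((k + i) mod n)) (cs ! (Suc ((k + i) mod n) mod n))"
    using assms unfolding cyclic_walk_def n_def by blast
  then show "undir_adj F (rotate k cs ! i) (rotate k cs ! (Suc i mod length (rotate k cs)))"
    using r1 r2 by (simp add: n_def)
qed

lemma Union_cycle_edges: "cs \<noteq> [] \<Longrightarrow> \<Union> (cycle_edges cs) = set cs"
proof
  assume "cs \<noteq> []"
  show "\<Union> (cycle_edges cs) \<subseteq> set cs" unfolding cycle_edges_def using \<open>cs \<noteq> []\<close> by auto
  show "set cs \<subseteq> \<Union> (cycle_edges cs)"
  proof
    fix x assume "x \<in> set cs"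
    then obtain i where "i < length cs" "cs ! i = x" by (metis in_set_conv_nth)
    then show "x \<in> \<Union> (cycle_edges cs)" unfolding cycle_edges_def by blast
  qed
qed

lemma cycle_edges_in_undir_cycles:
  "distinct cs \<Longrightarrow> length cs \<ge> 3 \<Longrightarrow> cyclic_walk E cs \<Longrightarrow> cycle_edges cs \<in> undir_cycles E"
  unfolding undir_cycles_def cycle_edges_def cyclic_walk_def undir_adj_def by blast

locale cycle_with_ear =
  fixes E F :: "('a \<times> 'a) set" and cs T :: "'a list" and j :: nat
  assumes cyclic: "cyclic_walk F cs" and F_subset: "F \<subseteq> E"
    and distinct_cycle: "distinct cs" and length_cycle: "length cs \<ge> 3"
    and ear_nonempty: "T \<noteq> []" and distinct_ear: "distinct T"
    and ear_walk: "successively (undir_adj E) T"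
    and hd_ear: "hd T = cs ! 0" and last_ear: "last T = cs ! j" and j: "0 < j" "j < length cs"
    and inner_disjoint: "set (butlast (tl T)) \<inter> set cs = {}"
    and proper_ear: "length T \<ge> 3 \<or> \<not> undir_adj F (hd T) (last T)"
begin

definition inner :: "'a list" where
  "inner = butlast (tl T)"

text \<open>The ear splits \<open>cs\<close> into two new cycles: the arc \<open>cs ! 0, \<dots>, cs ! j\<close> closed up by the
  reversed ear, and the ear followed by the complementary arc.\<close>

definition left_cycle :: "'a list" where
  "left_cycle = take (Suc j) cs @ rev inner"

definition right_cycle :: "'a list" where
  "right_cycle = T @ drop (Suc j) cs"

lemma cycle_nonempty: "cs \<noteq> []"
  using length_cycle by auto

lemma ear_ends_distinct: "hd T \<noteq> last T"
proof -
  have "cs ! 0 \<noteq> cs ! j"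
    using nth_eq_iff_index_eq[OF distinct_cycle, of 0 j] j cycle_nonempty by auto
  then show ?thesis using hd_ear last_ear by simp
qed

lemma ear_decomp: "T = cs ! 0 # inner @ [cs ! j]"
proof -
  obtain x xs where T: "T = x # xs" using ear_nonempty by (cases T) auto
  with ear_ends_distinct have "xs \<noteq> []" by auto
  then show ?thesis
    using T hd_ear last_ear append_butlast_last_id[of xs] unfolding inner_def by simp
qed

lemma inner_props: "distinct inner" "cs ! 0 \<notin> set inner" "cs ! j \<notin> set inner"
  "set inner \<inter> set cs = {}"
proof -
  have "distinct (cs ! 0 # inner @ [cs ! j])" using distinct_ear ear_decomp by metis
  then show "distinct inner" "cs ! 0 \<notin> set inner" "cs ! j \<notin> set inner" by auto
  show "set inner \<inter> set cs = {}" using inner_disjoint unfolding inner_def .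
qed

lemma set_ear: "set T = insert (cs ! 0) (insert (cs ! j) (set inner))"
  by (subst ear_decomp) auto

lemma length_ear: "length T = length inner + 2"
  by (subst ear_decomp) simp

lemma second_of_ear: "T ! 1 = (if inner = [] then cs ! j else hd inner)"
  by (subst ear_decomp) (auto simp: nth_append hd_conv_nth)

lemma cyclic_walk_left_cycle: "cyclic_walk E left_cycle"
proof -
  have cl: "successively (undir_adj E) (cs @ [hd cs])"
    using successively_undir_adj_mono[OF F_subset] cyclic cycle_nonempty
    by (simp add: cyclic_walk_iff_successively)
  have "take (Suc j) cs = take (Suc j) (cs @ [hd cs])" using j by simp
  then have "successively (undir_adj E) (take (Suc j) cs)" using successively_take[OF cl] by metis
  moreover have "successively (undir_adj E) (rev T)"
    using ear_walk successively_undir_adj_rev by blast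
  moreover have "last (take (Suc j) cs) = hd (rev T)"
    using j last_ear ear_nonempty by (simp add: take_Suc_conv_app_nth hd_rev)
  ultimately have "successively (undir_adj E) (take (Suc j) cs @ tl (rev T))"
    using successively_join cycle_nonempty by (metis take_eq_Nil Zero_not_Suc)
  moreover have "left_cycle @ [hd left_cycle] = take (Suc j) cs @ tl (rev T)"
    using cycle_nonempty
      unfolding left_cycle_def by (subst (3) ear_decomp) (simp add: hd_conv_nth nth_append)
  ultimately show ?thesis using cycle_nonempty
    by (simp add: cyclic_walk_iff_successively left_cycle_def)
qed

lemma cyclic_walk_right_cycle: "cyclic_walk E right_cycle"
proof -
  have cl: "successively (undir_adj E) (cs @ [hd cs])"
    using successively_undir_adj_mono[OF F_subset] cyclic cycle_nonempty
    by (simp add: cyclic_walk_iff_successively)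
  have dcl: "drop j (cs @ [hd cs]) = cs ! j # drop (Suc j) cs @ [hd cs]"
    using j by (simp add: Cons_nth_drop_Suc)
  have "successively (undir_adj E) (cs ! j # drop (Suc j) cs @ [hd cs])"
    using successively_drop[OF cl, of j] unfolding dcl .
  then have "successively (undir_adj E) (T @ drop (Suc j) cs @ [hd cs])"
    using successively_join[OF ear_walk _ ear_nonempty] last_ear by fastforce
  moreover have "right_cycle @ [hd right_cycle] = T @ drop (Suc j) cs @ [hd cs]"
    using hd_ear ear_nonempty cycle_nonempty
      unfolding right_cycle_def by (simp add: hd_conv_nth nth_append)
  ultimately show ?thesis using ear_nonempty
    by (simp add: cyclic_walk_iff_successively right_cycle_def)
qed

lemma distinct_left_cycle: "distinct left_cycle"
  unfolding left_cycle_def using distinct_cycle inner_props set_take_subset by fastforce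

lemma distinct_right_cycle: "distinct right_cycle"
proof -
  have "set T \<inter> set (drop (Suc j) cs) = {}"
  proof (rule ccontr)
    assume "set T \<inter> set (drop (Suc j) cs) \<noteq> {}"
    then obtain x where x: "x \<in> set T" "x \<in> set (drop (Suc j) cs)" by blast
    then have "x = cs ! 0 \<or> x = cs ! j"
      using inner_props(4) set_ear by (auto dest: in_set_dropD)
    then show False using x(2) nth_in_drop_iff[OF distinct_cycle] j cycle_nonempty by auto
  qed
  then show ?thesis unfolding right_cycle_def using distinct_ear distinct_cycle by simp
qed

lemma length_left_cycle: "length left_cycle \<ge> 3"
proof -
  have len: "length left_cycle = Suc j + length inner" using j unfolding left_cycle_def by simp
  show ?thesis
  proof (cases "length T \<ge> 3")
    case True then show ?thesis using len length_ear j by simp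
  next
    case False
    have "j \<noteq> 1"
    proof
      assume "j = 1"
      then have "undir_adj F (cs ! 0) (cs ! j)"
        using cyclic cycle_nonempty length_cycle unfolding cyclic_walk_def by force
      then show False using proper_ear False hd_ear last_ear by simp
    qed
    then show ?thesis using len j by simp
  qed
qed

lemma length_right_cycle: "length right_cycle \<ge> 3"
proof -
  have len: "length right_cycle = length T + (length cs - Suc j)"
    unfolding right_cycle_def by simp
  show ?thesis
  proof (cases "length T \<ge> 3")
    case True then show ?thesis using len by simp
  next
    case False
    have "j \<noteq> length cs - 1"
    proof
      assume jn: "j = length cs - 1"
      then have "Suc j = length cs" using j by simp
      then have "Suc j mod length cs = 0" by simp
      then have "undir_adj F (cs ! j) (cs ! 0)" using cyclic j unfolding cyclic_walk_def by metis
      then show False using proper_ear False hd_ear last_ear undir_adj_commute by metis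
    qed
    then show ?thesis using len length_ear j by simp
  qed
qed

lemma first_ear_edge_in_cycles:
  "{T ! 0, T ! 1} \<in> cycle_edges left_cycle" "{T ! 0, T ! 1} \<in> cycle_edges right_cycle"
proof -
  define i where "i = length left_cycle - 1"
  have "Suc i = length left_cycle" using length_left_cycle i_def by simp
  then have i: "i < length left_cycle" "Suc i mod length left_cycle = 0" by auto
  have l0: "left_cycle ! 0 = T ! 0" using hd_ear ear_nonempty cycle_nonempty
    unfolding left_cycle_def by (simp add: nth_append hd_conv_nth)
  have li: "left_cycle ! i = T ! 1"
  proof -
    have "left_cycle ! i = last left_cycle"
      using length_left_cycle last_conv_nth[of left_cycle] unfolding i_def by fastforce
    also have "\<dots> = T ! 1"
      using j unfolding second_of_ear left_cycle_def by (simp add: take_Suc_conv_app_nth last_rev)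
    finally show ?thesis .
  qed
  show "{T ! 0, T ! 1} \<in> cycle_edges left_cycle"
  proof -
    have "{left_cycle ! i, left_cycle ! (Suc i mod length left_cycle)} = {T ! 0, T ! 1}"
      using i l0 li by auto
    then show ?thesis unfolding cycle_edges_def using i(1) by blast
  qed
  have "right_cycle ! 0 = T ! 0" "right_cycle ! 1 = T ! 1" "Suc 0 mod length right_cycle = 1"
    using length_ear length_right_cycle unfolding right_cycle_def by (auto simp: nth_append)
  then show "{T ! 0, T ! 1} \<in> cycle_edges right_cycle"
    unfolding cycle_edges_def using length_right_cycle by (intro CollectI exI[of _ 0]) auto
qed

lemma set_left_cycle_neq_right_cycle: "set left_cycle \<noteq> set right_cycle"
proof (cases "j = 1")
  case False
  have "cs ! 1 \<in> set left_cycle"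
    using nth_in_take_iff[OF distinct_cycle, of 1 "Suc j"] length_cycle j False
    unfolding left_cycle_def by simp
  moreover have "cs ! 1 \<notin> set right_cycle"
  proof
    assume "cs ! 1 \<in> set right_cycle"
    then consider "cs ! 1 \<in> set T" | "cs ! 1 \<in> set (drop (Suc j) cs)"
      unfolding right_cycle_def by auto
    then show False
    proof cases
      case 1
      have "cs ! 1 \<in> set cs" using length_cycle by simp
      moreover have "cs ! 1 \<noteq> cs ! 0"
        using nth_eq_iff_index_eq[OF distinct_cycle, of 1 0] length_cycle cycle_nonempty by simp
      moreover have "cs ! 1 \<noteq> cs ! j"
        using nth_eq_iff_index_eq[OF distinct_cycle, of 1 j] j False by simp
      ultimately
      show False using 1 inner_props(4) set_ear by auto
    next
      case 2
      then show False using nth_in_drop_iff[OF distinct_cycle, of 1 "Suc j"] length_cycle j False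
        by simp
    qed
  qed
  ultimately show ?thesis by blast
next
  case True
  have "cs ! 2 \<in> set right_cycle"
    using nth_in_drop_iff[OF distinct_cycle, of 2 "Suc j"] length_cycle True
    unfolding right_cycle_def by simp
  moreover have "cs ! 2 \<notin> set left_cycle"
    using nth_in_take_iff[OF distinct_cycle, of 2 "Suc j"] length_cycle True inner_props(4)
    unfolding left_cycle_def by auto
  ultimately show ?thesis by blast
qed

end

lemma parallel_dpaths_cycle:
  assumes "acyclic E" and P1: "is_dpath E P1 a b" and P2: "is_dpath E P2 a b" and ne: "P1 \<noteq> P2"
    and disj: "set P1 \<inter> set P2 \<subseteq> {a, b}"
  defines "cs \<equiv> P1 @ rev (butlast (tl P2))"
  shows "distinct cs" "length cs \<ge> 3" "set cs = set P1 \<union> set P2"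
    "cyclic_walk (path_edges P1 \<union> path_edges P2) cs"
proof -
  define F where "F = path_edges P1 \<union> path_edges P2"
  define M where "M = butlast (tl P2)"
  have P1h: "P1 \<noteq> []" "hd P1 = a" "last P1 = b" and P2h: "P2 \<noteq> []" "hd P2 = a" "last P2 = b"
    using is_dpathD[OF P1] is_dpathD[OF P2] by auto
  have "a \<noteq> b" using ne dpath_self[OF assms(1)] P1 P2 by metis
  then have P2M: "P2 = a # M @ [b]"
    using hd_butlast_tl_last[OF length_ge_2_if_hd_neq_last] P2h M_def by metis
  then have dM: "distinct M" "a \<notin> set M" "b \<notin> set M"
    using dpath_distinct[OF assms(1) P2] by auto
  have "set M \<inter> set P1 = {}" using disj dM P2M by auto
  then show "distinct cs"
    using dpath_distinct[OF assms(1) P1] dM unfolding cs_def M_def[symmetric] by auto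
  show "set cs = set P1 \<union> set P2" using P2M hd_in_dpath[OF P1] last_in_dpath[OF P1]
    unfolding cs_def M_def[symmetric] by auto
  show "length cs \<ge> 3"
  proof (rule ccontr)
    assume "\<not> length cs \<ge> 3"
    moreover have "length P1 \<ge> 2" using length_ge_2_if_hd_neq_last P1h \<open>a \<noteq> b\<close> by metis
    moreover have "length cs = length P1 + length M" unfolding cs_def M_def[symmetric] by simp
    ultimately have "length M = 0" "length P1 \<le> 2" by linarith+
    then have "M = []" "length P1 \<le> 2" by auto
    then have "P1 = P2"
      using P2M P1h \<open>a \<noteq> b\<close> by (cases P1 rule: remdups_adj.cases) auto
    then show False using ne by contradiction
  qed
  have "successively (undir_adj F) P1" "successively (undir_adj F) (rev P2)"
    using successively_undir_adj_mono[OF _ path_edges_undir_walk] successively_undir_adj_rev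
    unfolding F_def by blast+
  then have "successively (undir_adj F) (P1 @ tl (rev P2))"
    using successively_join P1h P2h by (metis hd_rev)
  moreover have "cs @ [hd cs] = P1 @ tl (rev P2)"
    using P2M P1h unfolding cs_def M_def[symmetric] by simp
  moreover have "cs \<noteq> []" using P1h unfolding cs_def by simp
  ultimately show "cyclic_walk F cs" using cyclic_walk_iff_successively by metis
qed

lemma not_undir_adj_if_edge_notin:
  assumes "acyclic E" "F \<subseteq> E" "(x, y) \<in> E" "(x, y) \<notin> F"
  shows "\<not> undir_adj F x y"
proof
  assume "undir_adj F x y"
  then have "(y, x) \<in> E" using assms(2,4) unfolding undir_adj_def by blast
  then show False using acyclic_edge_not_reach[OF assms(1,3)] edge_reach[of y x E] by blast
qed

lemma dpath_ear:
  assumes "acyclic E" "F \<subseteq> E" and R: "is_dpath E R c d" and "c \<in> C" "d \<in> C"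
    and "\<not> path_edges R \<subseteq> F"
  obtains T where "T \<noteq> []" "distinct T" "successively (undir_adj E) T"
    "hd T \<in> C" "last T \<in> C" "hd T \<noteq> last T" "set (butlast (tl T)) \<inter> C = {}"
    "length T \<ge> 3 \<or> \<not> undir_adj F (hd T) (last T)"
proof -
  have dR: "distinct R" using dpath_distinct[OF assms(1) R] .
  have Rh: "R ! 0 \<in> C" "R ! (length R - 1) \<in> C"
    using is_dpathD[OF R] assms(4,5) by (auto simp: hd_conv_nth last_conv_nth)
  obtain k0 where k0: "Suc k0 < length R" "(R ! k0, R ! Suc k0) \<notin> F"
    using assms(6) unfolding path_edges_def by blast
  obtain i where i: "i \<le> k0" "R ! i \<in> C" "\<forall>l. i < l \<and> l \<le> k0 \<longrightarrow> R ! l \<notin> C"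
    using ex_last_index[of "\<lambda>l. R ! l \<in> C" k0] Rh(1) by blast
  have "i < length R - 1" using i(1) k0(1) by simp
  then obtain k where k: "i < k" "k \<le> length R - 1" "R ! k \<in> C" "\<forall>l. i < l \<and> l < k \<longrightarrow> R ! l \<notin> C"
    using ex_first_index[of i "length R - 1" "\<lambda>l. R ! l \<in> C"] Rh(2) by blast
  have kl: "k < length R" using k(2) k0(1) by simp
  define T where "T = drop i (take (Suc k) R)"
  note T = drop_take_nth[OF less_imp_le[OF k(1)] kl, folded T_def]
  have walk: "successively (undir_adj E) T"
    using successively_drop[OF successively_take[OF dpath_undir_walk[OF R]]] T_def by simp
  have ends: "hd T \<in> C" "last T \<in> C" "hd T \<noteq> last T"
    using T i(2) k(1,3) nth_eq_iff_index_eq[OF dR _ kl, of i] kl by auto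
  have inner: "set (butlast (tl T)) \<inter> C = {}"
  proof -
    have "x \<notin> C" if x: "x \<in> set (butlast (tl T))" for x
    proof -
      obtain l where l: "0 < l" "Suc l < length T" "x = T ! l"
        using in_butlast_tl_conv_nth[OF x] by blast
      then show ?thesis using k(4) kl T(4) unfolding T_def by auto
    qed
    then show ?thesis by blast
  qed
  have proper: "length T \<ge> 3 \<or> \<not> undir_adj F (hd T) (last T)"
  proof (cases "k = Suc i")
    case True
    have "i = k0"
    proof (rule ccontr)
      assume "i \<noteq> k0"
      then have "Suc i \<le> k0" using i(1) by simp
      then show False using i(3) k(3) True by blast
    qed
    moreover have "(R ! i, R ! Suc i) \<in> E" using R True kl unfolding is_dpath_def by auto
    ultimately show ?thesis
      using not_undir_adj_if_edge_notin[OF assms(1,2)] k0(2) T(2,3) True by simp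
  next
    case False
    then have "3 \<le> length T" using T(4) k(1) by linarith
    then show ?thesis ..
  qed
  have "distinct T" unfolding T_def using dR by simp
  then show ?thesis using that T(1) walk ends inner proper by blast
qed

section \<open>Cactus networks\<close>

locale cactus =
  fixes V :: "'a set" and E :: "('a \<times> 'a) set"
  assumes cactus_network: "cactus_network V E"
begin

lemma acyclic: "acyclic E"
  using cactus_network unfolding cactus_network_def acyclic_def by blast

lemma edges_subset: "E \<subseteq> V \<times> V"
  using cactus_network unfolding cactus_network_def by blast

lemma finite_edges: "finite E"
  using cactus_network edges_subset
    unfolding cactus_network_def by (meson finite_SigmaI finite_subset)

lemma reach_in_V: "a \<in> V \<Longrightarrow> reach E a x \<Longrightarrow> x \<in> V"
  unfolding reach_def by (erule rtrancl_induct) (use edges_subset in auto)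

lemma ex_root_reaching: "\<exists>r \<in> V. \<forall>x \<in> V. reach E r x"
proof -
  obtain r where r: "r \<in> V" "\<forall>x. (x, r) \<notin> E" "\<And>r'. r' \<in> V \<and> (\<forall>x. (x, r') \<notin> E) \<Longrightarrow> r' = r"
    using cactus_network unfolding cactus_network_def by metis
  have "reach E r x" if x: "x \<in> V" for x
  proof -
    define S where "S = {z \<in> V. reach E z x}"
    have "x \<in> S" using x unfolding S_def reach_def by blast
    then obtain z where z: "z \<in> S" "\<forall>y. (y, z) \<in> E \<longrightarrow> y \<notin> S"
      using finite_acyclic_wf[OF finite_edges acyclic] unfolding wf_eq_minimal by blast
    have "(y, z) \<notin> E" for y
    proof
      assume yz: "(y, z) \<in> E"
      then have "y \<in> V" using edges_subset by blast
      moreover have "reach E y x"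
        using z(1) reach_trans[OF edge_reach[OF yz]] unfolding S_def by blast
      ultimately show False using z(2) yz unfolding S_def by blast
    qed
    then show ?thesis using r(3) z(1) unfolding S_def by blast
  qed
  then show ?thesis using r(1) by blast
qed

lemma ex_lca:
  assumes "u \<in> V" "p \<in> V"
  shows "\<exists>w. is_lca V E {u, p} w"
proof -
  obtain r where r: "r \<in> V" "\<forall>x \<in> V. reach E r x" using ex_root_reaching by blast
  define S where "S = {w \<in> V. reach E w u \<and> reach E w p}"
  have "r \<in> S" using r assms S_def by simp
  moreover have "wf ((E\<inverse>)\<^sup>+)"
    using finite_acyclic_wf_converse[OF finite_edges acyclic] by (rule wf_trancl)
  ultimately obtain z where z: "z \<in> S" "\<forall>y. (y, z) \<in> (E\<inverse>)\<^sup>+ \<longrightarrow> y \<notin> S"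
    unfolding wf_eq_minimal by blast
  have "w' \<notin> S" if "w' \<noteq> z" "reach E z w'" for w'
  proof -
    have "(z, w') \<in> E\<^sup>+" using that unfolding reach_def by (metis rtrancl_eq_or_trancl)
    then show ?thesis using z(2) by (simp add: trancl_converse)
  qed
  then show ?thesis using z(1) reach_in_V unfolding S_def is_lca_def by blast
qed

lemma cycles_sharing_edge_eq:
  assumes "undir_adj E x y" "C1 \<in> undir_cycles E" "C2 \<in> undir_cycles E" "{x, y} \<in> C1" "{x, y} \<in> C2"
  shows "C1 = C2"
proof -
  have shared: "\<And>x y. (x, y) \<in> E \<Longrightarrow> {x, y} \<in> C1 \<Longrightarrow> {x, y} \<in> C2 \<Longrightarrow> C1 = C2"
    using cactus_network assms(2,3) unfolding cactus_network_def by blast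
  show ?thesis
    using assms(1,4,5) shared[of x y] shared[of y x] insert_commute unfolding undir_adj_def by metis
qed

text \<open>Splitting the cycle along an ear would produce two distinct cycles sharing the first edge of
  the ear.\<close>

lemma no_ear:
  assumes "cyclic_walk F cs" "F \<subseteq> E" "distinct cs" "length cs \<ge> 3"
    and "T \<noteq> []" "distinct T" "successively (undir_adj E) T"
    and "hd T \<in> set cs" "last T \<in> set cs" "hd T \<noteq> last T"
    and "set (butlast (tl T)) \<inter> set cs = {}"
    and "length T \<ge> 3 \<or> \<not> undir_adj F (hd T) (last T)"
  shows False
proof -
  obtain i where i: "i < length cs" "cs ! i = hd T" using assms(8) by (metis in_set_conv_nth)
  define cs' where "cs' = rotate i cs"
  have "cs' ! 0 = hd T" using i nth_rotate[of 0 cs i] unfolding cs'_def by fastforce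
  moreover obtain j where j: "j < length cs'" "cs' ! j = last T"
    using assms(9) unfolding cs'_def by (metis in_set_conv_nth set_rotate)
  moreover have "0 < j" using j calculation assms(10) by (cases j) auto
  ultimately interpret ear: cycle_with_ear E F cs' T j
    using assms cyclic_walk_rotate unfolding cs'_def by unfold_locales auto
  have "undir_adj E (T ! 0) (T ! 1)"
    using successively_nth[OF assms(7), of 0] ear.length_ear by simp
  then have "cycle_edges ear.left_cycle = cycle_edges ear.right_cycle"
    using cycles_sharing_edge_eq ear.first_ear_edge_in_cycles cycle_edges_in_undir_cycles
      ear.distinct_left_cycle ear.length_left_cycle ear.cyclic_walk_left_cycle
      ear.distinct_right_cycle ear.length_right_cycle ear.cyclic_walk_right_cycle by metis
  then have "set ear.left_cycle = set ear.right_cycle"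
    using Union_cycle_edges ear.length_left_cycle ear.length_right_cycle
    by (metis list.size(3) not_numeral_le_zero)
  then show False using ear.set_left_cycle_neq_right_cycle by contradiction
qed

text \<open>The two paths bound a cycle; a path between two of its vertices that leaves its edges
  contains an ear of it.\<close>

lemma path_edges_subset_parallel_paths:
  assumes "is_dpath E P1 a b" "is_dpath E P2 a b" "P1 \<noteq> P2" "set P1 \<inter> set P2 \<subseteq> {a, b}"
    and "is_dpath E R c d" "c \<in> set P1 \<union> set P2" "d \<in> set P1 \<union> set P2"
  shows "path_edges R \<subseteq> path_edges P1 \<union> path_edges P2"
proof (rule ccontr)
  assume not_subset: "\<not> ?thesis"
  have subset: "path_edges P1 \<union> path_edges P2 \<subseteq> E"
    using dpath_path_edges_subset[OF assms(1)] dpath_path_edges_subset[OF assms(2)] by blast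
  note cycle = parallel_dpaths_cycle[OF acyclic assms(1-4)]
  obtain T where T: "T \<noteq> []" "distinct T" "successively (undir_adj E) T"
    "hd T \<in> set P1 \<union> set P2" "last T \<in> set P1 \<union> set P2" "hd T \<noteq> last T"
    "set (butlast (tl T)) \<inter> (set P1 \<union> set P2) = {}"
    "length T \<ge> 3 \<or> \<not> undir_adj (path_edges P1 \<union> path_edges P2) (hd T) (last T)"
    by (rule dpath_ear[OF acyclic subset assms(5-7) not_subset])
  show False
    using no_ear[OF cycle(4) subset cycle(1,2) T(1-3)] T(4-8) unfolding cycle(3) by blast
qed

end

locale diamond = cactus +
  fixes A B :: "'a list" and u y pa pb :: 'a
  assumes path_A: "is_dpath E A u y" and path_B: "is_dpath E B u y"
    and disjoint: "set A \<inter> set B \<subseteq> {u, y}"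
    and edge_A: "(pa, y) \<in> path_edges A" and edge_B: "(pb, y) \<in> path_edges B"
    and edge_A_notin_B: "(pa, y) \<notin> path_edges B" and edge_B_notin_A: "(pb, y) \<notin> path_edges A"
begin

lemma swap: "diamond V E B A u y pb pa"
  using path_A path_B disjoint edge_A edge_B edge_A_notin_B edge_B_notin_A by unfold_locales auto

lemma u_neq_y: "u \<noteq> y"
  using edge_A dpath_self[OF acyclic] path_A by fastforce

lemma distinct_A: "distinct A"
  using dpath_distinct[OF acyclic path_A] .

lemma sink_edges: "(pa, y) \<in> E" "(pb, y) \<in> E"
  using edge_A edge_B dpath_path_edges_subset[OF path_A] dpath_path_edges_subset[OF path_B]
    by blast+

lemma u_in_V: "u \<in> V"
  using dpath_second_vertex[OF path_A u_neq_y] edges_subset by blast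

lemma A_neq_B: "A \<noteq> B"
  using edge_A edge_A_notin_B by blast

lemma edge_into_sink_on_A: "(x, y) \<in> path_edges A \<Longrightarrow> x = pa"
  using path_edges_into_last_unique[OF distinct_A] edge_A is_dpathD[OF path_A] by metis

lemma dpath_within_diamond:
  "is_dpath E R c d \<Longrightarrow> c \<in> set A \<union> set B \<Longrightarrow> d \<in> set A \<union> set B \<Longrightarrow>
     path_edges R \<subseteq> path_edges A \<union> path_edges B"
  using path_edges_subset_parallel_paths[OF path_A path_B A_neq_B disjoint] .

lemma parent_via_diamond:
  assumes "(p, y) \<in> E" "is_dpath E Y z p" "z \<in> set A \<union> set B"
  shows "p = pa \<or> p = pb"
proof -
  have "is_dpath E (Y @ [y]) z y" using dpath_snoc[OF assms(2,1)] .
  moreover have "(p, y) \<in> path_edges (Y @ [y])"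
    using path_edges_snoc is_dpathD[OF assms(2)] by fastforce
  ultimately have "(p, y) \<in> path_edges A \<union> path_edges B"
    using dpath_within_diamond assms(3) last_in_dpath[OF path_A] by blast
  then show ?thesis using edge_into_sink_on_A diamond.edge_into_sink_on_A[OF swap] by blast
qed

lemma below_sink_meets_diamond_only_at_sink:
  "is_dpath E D y z \<Longrightarrow> x \<in> set A \<union> set B \<Longrightarrow> x \<in> set D \<Longrightarrow> x = y"
proof -
  assume D: "is_dpath E D y z" and x: "x \<in> set A \<union> set B" "x \<in> set D"
  have "reach E x y" using x(1) dpath_mem_reach[OF path_A] dpath_mem_reach[OF path_B] by blast
  moreover have "reach E y x" using dpath_mem_reach[OF D x(2)] by blast
  ultimately show "x = y" using reach_antisym[OF acyclic] by blast
qed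

text \<open>A path leaving the diamond at \<open>c \<in> A\<close> and rejoining a path below \<open>y\<close> would, together with
  \<open>B\<close>, bound a cycle that misses the edge \<open>(pa, y)\<close> of the arc of \<open>A\<close> from \<open>c\<close> to \<open>y\<close>.\<close>

lemma no_detour:
  assumes Dz: "is_dpath E Dz y z" and Rz: "is_dpath E Rz c z" and cA: "c \<in> set A" and cy: "c \<noteq> y"
    and yR: "y \<notin> set Rz"
    and Rint: "\<forall>x \<in> set Rz. x \<noteq> c \<longrightarrow> x \<noteq> z \<longrightarrow> x \<notin> set A \<union> set B \<and> x \<notin> set Dz"
  shows False
proof -
  obtain A1 A2 where A1: "is_dpath E A1 u c" and A2: "is_dpath E A2 c y" and "A = A1 @ tl A2"
    by (rule dpath_split[OF path_A cA])
  then have sA: "set A = set A1 \<union> set A2"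
    and peA: "path_edges A = path_edges A1 \<union> path_edges A2"
    using set_dpath_append[OF A1 A2] path_edges_dpath_append[OF A1 A2] by simp_all
  have yA1: "y \<notin> set A1"
    using dpath_mem_reach[OF A1] dpath_reach[OF A2] reach_antisym[OF acyclic] cy by metis
  have inD: "x = y" if "x \<in> set A \<union> set B" "x \<in> set Dz" for x
    using below_sink_meets_diamond_only_at_sink[OF Dz that] .
  define P1 where "P1 = A1 @ tl Rz"
  define P2 where "P2 = B @ tl Dz"
  have P1: "is_dpath E P1 u z" and P2: "is_dpath E P2 u z"
    using dpath_append[OF A1 Rz] dpath_append[OF path_B Dz] unfolding P1_def P2_def .
  have sP1: "set P1 = set A1 \<union> set Rz" and sP2: "set P2 = set B \<union> set Dz"
    using set_dpath_append[OF A1 Rz] set_dpath_append[OF path_B Dz] unfolding P1_def P2_def .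
  have yB: "y \<in> set B" using last_in_dpath[OF path_B] .
  have ne: "P1 \<noteq> P2" using sP1 sP2 yA1 yR yB by auto
  have disj: "set P1 \<inter> set P2 \<subseteq> {u, z}"
  proof
    fix x assume x: "x \<in> set P1 \<inter> set P2"
    show "x \<in> {u, z}"
    proof (cases "x \<in> set A1")
      case True
      then have "x \<in> set A" "x \<noteq> y" using sA yA1 by auto
      then show ?thesis using x sP2 disjoint inD by blast
    next
      case False
      then have "x \<in> set Rz" "x \<noteq> c" using x sP1 last_in_dpath[OF A1] by auto
      then show ?thesis using x sP2 Rint by blast
    qed
  qed
  have "pa \<in> set A" "pa \<noteq> y"
    using path_edges_memD[OF edge_A] acyclic_edge_neq[OF acyclic sink_edges(1)] by auto
  then have "pa \<notin> set Dz" using inD by blast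
  then have "(pa, y) \<notin> path_edges A1 \<union> path_edges Rz \<union> path_edges B \<union> path_edges Dz"
    using yA1 yR edge_A_notin_B path_edges_memD[of pa y A1] path_edges_memD[of pa y Rz]
      path_edges_memD[of pa y Dz] by blast
  moreover have "(pa, y) \<in> path_edges A2" using peA edge_A yA1 path_edges_memD[of pa y A1] by blast
  moreover have "c \<in> set P1" "y \<in> set P2" using sP1 sP2 hd_in_dpath[OF Rz] yB by auto
  ultimately show False
    using path_edges_subset_parallel_paths[OF P1 P2 ne disj A2]
      path_edges_dpath_append[OF A1 Rz] path_edges_dpath_append[OF path_B Dz]
    unfolding P1_def P2_def by blast
qed

lemma every_path_through_sink:
  assumes D: "is_dpath E D y v" and R: "is_dpath E R u v"
  shows "y \<in> set R"
proof (rule ccontr)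
  assume yR: "y \<notin> set R"
  have uC: "u \<in> set A \<union> set B" using hd_in_dpath[OF path_A] by blast
  then have uD: "u \<notin> set D" using below_sink_meets_diamond_only_at_sink[OF D] u_neq_y by blast
  obtain c z Rz where Rz: "is_dpath E Rz c z" and c: "c \<in> set A \<union> set B" and z: "z \<in> set D"
    and "set Rz \<subseteq> set R"
    and Rint: "\<forall>x \<in> set Rz. x \<noteq> c \<longrightarrow> x \<noteq> z \<longrightarrow> x \<notin> set A \<union> set B \<and> x \<notin> set D"
    by (rule dpath_segment_between[OF R uC last_in_dpath[OF D] uD])
  then have yRz: "y \<notin> set Rz" and cy: "c \<noteq> y" using yR hd_in_dpath[OF Rz] by auto
  obtain D1 D2 where D1: "is_dpath E D1 y z" and D2: "is_dpath E D2 z v" and "D = D1 @ tl D2"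
    by (rule dpath_split[OF D z])
  then have "set D1 \<subseteq> set D" using set_dpath_append[OF D1 D2] by blast
  then have Rint1: "\<forall>x \<in> set Rz. x \<noteq> c \<longrightarrow> x \<noteq> z \<longrightarrow> x \<notin> set A \<union> set B \<and> x \<notin> set D1"
    using Rint by blast
  show False
  proof (cases "c \<in> set A")
    case True
    then show False using no_detour[OF D1 Rz _ cy yRz Rint1] by blast
  next
    case False
    then have "c \<in> set B" using c by blast
    moreover have "\<forall>x \<in> set Rz. x \<noteq> c \<longrightarrow> x \<noteq> z \<longrightarrow> x \<notin> set B \<union> set A \<and> x \<notin> set D1"
      using Rint1 by blast
    ultimately show False using diamond.no_detour[OF swap D1 Rz _ cy yRz] by blast
  qed
qed

text \<open>A third parent \<open>p\<close> of \<open>y\<close>, reached from the lowest common ancestor \<open>w\<close> of \<open>u\<close> and \<open>p\<close>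
  outside the diamond, would close a second diamond from \<open>w\<close> to \<open>y\<close> that \<open>B\<close> leaves.\<close>

lemma no_parent_outside_diamond:
  assumes py: "(p, y) \<in> E" and lca: "is_lca V E {u, p} w" and Y: "is_dpath E Y w p"
    and YC: "set Y \<inter> (set A \<union> set B) = {}"
  shows False
proof -
  have "reach E w u" using lca unfolding is_lca_def by blast
  then obtain X where X: "is_dpath E X w u" by (blast dest: reach_imp_dpath)
  have lowest: "w' = w" if "reach E w w'" "reach E w' u" "reach E w' p" for w'
    using lca that unfolding is_lca_def by blast
  have XY: "z = w" if "z \<in> set X" "z \<in> set Y" for z
    using lowest dpath_mem_reach[OF X that(1)] dpath_mem_reach[OF Y that(2)] by blast
  define Pa where "Pa = X @ tl A"
  define Pb where "Pb = Y @ [y]"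
  have Pa: "is_dpath E Pa w y" using dpath_append[OF X path_A] Pa_def by simp
  have Pb: "is_dpath E Pb w y" using dpath_snoc[OF Y py] Pb_def by simp
  have sPa: "set Pa = set X \<union> set A" using set_dpath_append[OF X path_A] Pa_def by simp
  have sPb: "set Pb = insert y (set Y)" using Pb_def by simp
  have uA: "u \<in> set A" "y \<in> set A" using hd_in_dpath[OF path_A] last_in_dpath[OF path_A] .
  have "u \<notin> set Pb" using sPb YC uA u_neq_y by auto
  then have ne: "Pa \<noteq> Pb" using sPa uA by auto
  have disj: "set Pa \<inter> set Pb \<subseteq> {w, y}"
    using XY YC sPa sPb by auto
  have yX: "y \<notin> set X"
  proof
    assume "y \<in> set X"
    then have "reach E y u" using dpath_mem_reach[OF X] by blast
    then show False using reach_antisym[OF acyclic _ dpath_reach[OF path_A]] u_neq_y by blast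
  qed
  have yY: "y \<notin> set Y" using YC uA by blast
  have "pb \<noteq> p" using path_edges_memD[OF edge_B] YC last_in_dpath[OF Y] by blast
  then have "(pb, y) \<notin> path_edges X \<union> path_edges A \<union> insert (p, y) (path_edges Y)"
    using yX yY edge_B_notin_A path_edges_memD[of pb y X] path_edges_memD[of pb y Y] by blast
  then have "(pb, y) \<notin> path_edges Pa \<union> path_edges Pb"
    using path_edges_dpath_append[OF X path_A] path_edges_snoc[of Y y] is_dpathD[OF Y]
    unfolding Pa_def Pb_def by simp
  moreover have "u \<in> set Pa \<union> set Pb" "y \<in> set Pa \<union> set Pb" using sPa uA by auto
  ultimately show False
    using path_edges_subset_parallel_paths[OF Pa Pb ne disj path_B] edge_B by blast
qed

lemma parents_sink: "parents E y = {pa, pb}"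
proof
  show "{pa, pb} \<subseteq> parents E y" using sink_edges unfolding parents_def by simp
  show "parents E y \<subseteq> {pa, pb}"
  proof
    fix p assume "p \<in> parents E y"
    then have py: "(p, y) \<in> E" unfolding parents_def by simp
    have "p \<in> V" using py edges_subset by blast
    then obtain w where lca: "is_lca V E {u, p} w" using ex_lca[OF u_in_V] by blast
    then have "reach E w p" unfolding is_lca_def by blast
    then obtain Y where Y: "is_dpath E Y w p" by (blast dest: reach_imp_dpath)
    show "p \<in> {pa, pb}"
    proof (cases "set Y \<inter> (set A \<union> set B) = {}")
      case True
      then show ?thesis using no_parent_outside_diamond[OF py lca Y] by blast
    next
      case False
      then obtain z where z: "z \<in> set Y" "z \<in> set A \<union> set B" by blast
      obtain Y1 Y2 where "is_dpath E Y1 w z" "is_dpath E Y2 z p" "Y = Y1 @ tl Y2"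
        by (rule dpath_split[OF Y z(1)])
      then show ?thesis using parent_via_diamond[OF py _ z(2)] by blast
    qed
  qed
qed

text \<open>A vertex of \<open>A\<close> below \<open>u\<close> cannot reach \<open>pb\<close>: such a path stays inside the diamond, hence
  inside \<open>A\<close>, but it ends with the edge \<open>(pb, y)\<close> of \<open>B\<close>.\<close>

lemma no_lower_ancestor_on_A:
  assumes "w \<in> set A" "w \<noteq> u" "reach E w pb"
  shows False
proof -
  obtain Z where Z: "is_dpath E Z w pb" using reach_imp_dpath[OF assms(3)] by blast
  have Zs: "is_dpath E (Z @ [y]) w y" using dpath_snoc[OF Z sink_edges(2)] .
  have "path_edges (Z @ [y]) \<subseteq> path_edges A \<union> path_edges B"
    using dpath_within_diamond[OF Zs] assms(1) last_in_dpath[OF path_A] by blast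
  then have "path_edges (Z @ [y]) \<subseteq> path_edges A"
    using path_edges_subset_first_path[OF _ _ _ _ distinct_A dpath_distinct[OF acyclic path_B]]
      is_dpathD[OF Zs] is_dpathD[OF path_A] is_dpathD[OF path_B] disjoint assms(1,2) by simp
  moreover have "(pb, y) \<in> path_edges (Z @ [y])"
    using path_edges_snoc is_dpathD[OF Z] by fastforce
  ultimately show False using edge_B_notin_A by blast
qed

lemma lca_parents: "is_lca V E {pa, pb} u"
  unfolding is_lca_def
proof (intro conjI allI impI ballI)
  show "u \<in> V" by (rule u_in_V)
  have "reach E u pa" using dpath_mem_reach[OF path_A path_edges_memD[OF edge_A, THEN conjunct1]] ..
  moreover have "reach E u pb"
    using dpath_mem_reach[OF path_B path_edges_memD[OF edge_B, THEN conjunct1]] ..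
  ultimately show "reach E u a" if "a \<in> {pa, pb}" for a using that by blast
next
  fix w assume "w \<noteq> u \<and> reach E u w \<and> (\<forall>a \<in> {pa, pb}. reach E w a)"
  then have w: "w \<noteq> u" "reach E u w" "reach E w pa" "reach E w pb" by auto
  consider "w \<in> set A" | "w \<in> set B" | "w \<notin> set A \<union> set B" by blast
  then show False
  proof cases
    case 1
    then show False using no_lower_ancestor_on_A w by blast
  next
    case 2
    then show False using diamond.no_lower_ancestor_on_A[OF swap] w by blast
  next
    case 3
    obtain Z where Z: "is_dpath E Z u w" using reach_imp_dpath[OF w(2)] ..
    obtain Zb where "is_dpath E Zb w pb" using reach_imp_dpath[OF w(4)] ..
    then have Zb: "is_dpath E (Zb @ [y]) w y" by (rule dpath_snoc[OF _ sink_edges(2)])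
    have R: "is_dpath E (Z @ tl (Zb @ [y])) u y" using dpath_append[OF Z Zb] .
    have "w \<noteq> hd Z" using is_dpathD[OF Z] w(1) by simp
    then obtain x where "(x, w) \<in> path_edges Z"
      using ex_path_edge_into[OF last_in_dpath[OF Z]] by blast
    then have "(x, w) \<in> path_edges (Z @ tl (Zb @ [y]))"
      using path_edges_dpath_append[OF Z Zb] by blast
    moreover have "(x, w) \<notin> path_edges A \<union> path_edges B"
      using 3 path_edges_memD[of x w A] path_edges_memD[of x w B] by blast
    ultimately show False
      using dpath_within_diamond[OF R] hd_in_dpath[OF path_A] last_in_dpath[OF path_A] by blast
  qed
qed

lemma is_sbp_source_sink: "is_sbp V E u y"
proof -
  have "pa \<noteq> pb" using edge_B edge_A_notin_B by blast
  then have "is_sink E y" unfolding is_sink_def parents_sink by simp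
  moreover have "y \<in> V" using sink_edges edges_subset by blast
  ultimately show ?thesis unfolding is_sbp_def using lca_parents parents_sink by simp
qed

lemma cut_vertex_sink:
  assumes "reach E y v"
  shows "cut_vertex E u y v"
  unfolding cut_vertex_def
proof (intro conjI allI impI)
  show "reach E u y" using dpath_reach[OF path_A] .
  show "reach E y v" by fact
  obtain D where D: "is_dpath E D y v" using reach_imp_dpath[OF assms] ..
  fix R assume "is_dpath E R u v"
  then show "y \<in> set R" by (rule every_path_through_sink[OF D])
qed

end

context cactus
begin

lemma diamond_of_first_meeting:
  assumes A: "is_dpath E A u y" and B: "is_dpath E B u y" and AB: "set A \<inter> set B \<subseteq> {u, y}"
    and "y \<noteq> u" and "A ! 1 \<noteq> B ! 1"
  obtains pa pb where "diamond V E A B u y pa pb"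
proof -
  have dA: "distinct A" and dB: "distinct B"
    using dpath_distinct[OF acyclic A] dpath_distinct[OF acyclic B] .
  have lA: "length A \<ge> 2" and lB: "length B \<ge> 2"
    using dpath_second_vertex[OF A] dpath_second_vertex[OF B] assms(4) by auto
  define pa where "pa = A ! (length A - 2)"
  define pb where "pb = B ! (length B - 2)"
  have paE: "(pa, y) \<in> path_edges A" and pbE: "(pb, y) \<in> path_edges B"
    using last_edge_in_path_edges[OF lA] last_edge_in_path_edges[OF lB] is_dpathD[OF A]
      is_dpathD[OF B] unfolding pa_def pb_def by auto
  have A0: "A ! 0 = u" and B0: "B ! 0 = u"
    using is_dpathD[OF A] is_dpathD[OF B] by (auto simp: hd_conv_nth)
  have A_last: "A ! (length A - 1) = y" and B_last: "B ! (length B - 1) = y"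
    using is_dpathD[OF A] is_dpathD[OF B] by (auto simp: last_conv_nth)
  have "pa \<noteq> pb"
  proof
    assume eq: "pa = pb"
    have "pa \<in> set A" "pb \<in> set B" using paE pbE path_edges_memD by metis+
    moreover have "pa \<noteq> y"
      using acyclic_edge_neq[OF acyclic] paE dpath_path_edges_subset[OF A] by blast
    ultimately have "pa = u" using AB eq by blast
    then have "length A - 2 = 0" "length B - 2 = 0"
      using nth_eq_iff_index_eq[OF dA, of "length A - 2" 0]
        nth_eq_iff_index_eq[OF dB, of "length B - 2" 0]
        lA lB A0 B0 eq is_dpathD[OF A] is_dpathD[OF B] unfolding pa_def pb_def by auto
    then have "length A = 2" "length B = 2" using lA lB by simp_all
    then have "A ! 1 = y" "B ! 1 = y" using A_last B_last by simp_all
    then show False using assms(5) by simp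
  qed
  moreover have "x = pa" if "(x, y) \<in> path_edges A" for x
    using path_edges_into_last_unique[OF dA, of x pa] that paE is_dpathD[OF A] by simp
  moreover have "x = pb" if "(x, y) \<in> path_edges B" for x
    using path_edges_into_last_unique[OF dB, of x pb] that pbE is_dpathD[OF B] by simp
  ultimately have "(pa, y) \<notin> path_edges B" "(pb, y) \<notin> path_edges A" by blast+
  then have "diamond V E A B u y pa pb"
    using A B AB paE pbE by unfold_locales
  then show ?thesis using that by blast
qed

lemma branching_vertex_sbp:
  assumes "(u, w1) \<in> E" "(u, w2) \<in> E" "w1 \<noteq> w2" "reach E w1 v" "reach E w2 v"
  obtains y where "is_sbp V E u y" "cut_vertex E u y v" "y \<noteq> u"
proof -
  obtain Q1 where Q1: "is_dpath E Q1 w1 v" using reach_imp_dpath[OF assms(4)] ..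
  obtain Q2 where Q2: "is_dpath E Q2 w2 v" using reach_imp_dpath[OF assms(5)] ..
  have "u \<noteq> v" using acyclic_edge_not_reach[OF acyclic assms(1)] assms(4) by blast
  then obtain y A B where A: "is_dpath E A u y" and B: "is_dpath E B u y"
    and AB: "set A \<inter> set B \<subseteq> {u, y}" and yu: "y \<noteq> u"
    and second: "A ! 1 = (u # Q1) ! 1" "B ! 1 = (u # Q2) ! 1" and yv: "reach E y v"
    by (rule first_meeting[OF acyclic dpath_Cons[OF Q1 assms(1)] dpath_Cons[OF Q2 assms(2)]])
  have "A ! 1 \<noteq> B ! 1"
    using second is_dpathD[OF Q1] is_dpathD[OF Q2] assms(3) by (simp add: hd_conv_nth[symmetric])
  then obtain pa pb where d: "diamond V E A B u y pa pb"
    by (rule diamond_of_first_meeting[OF A B AB yu])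
  show ?thesis
    by (rule that[OF diamond.is_sbp_source_sink[OF d] diamond.cut_vertex_sink[OF d yv] yu])
qed

lemma paths_V_subset:
  assumes "u \<in> V"
  shows "paths_V E u v \<subseteq> V"
proof
  fix x assume "x \<in> paths_V E u v"
  then obtain xs where "is_dpath E xs u v" "x \<in> set xs" unfolding paths_V_iff by blast
  then have "reach E u x" by (blast dest: dpath_mem_reach)
  then show "x \<in> V" using reach_in_V[OF assms] by blast
qed

lemma card_paths_V_cut_vertex_less:
  assumes "u \<in> V" "cut_vertex E u w v" "u \<noteq> w"
  shows "card (paths_V E w v) < card (paths_V E u v)"
proof (rule psubset_card_mono)
  have "finite V" using cactus_network unfolding cactus_network_def by blast
  then show "finite (paths_V E u v)" using paths_V_subset[OF assms(1)] finite_subset by blast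
  have uw: "reach E u w" and wv: "reach E w v" using cut_vertexD[OF assms(2)] by auto
  obtain xs where xs: "is_dpath E xs u v" using reach_imp_dpath[OF reach_trans[OF uw wv]] ..
  have "u \<in> paths_V E u v" using xs hd_in_dpath[OF xs] unfolding paths_V_iff by blast
  moreover have "u \<notin> paths_V E w v"
  proof
    assume "u \<in> paths_V E w v"
    then obtain ys where "is_dpath E ys w v" "u \<in> set ys" unfolding paths_V_iff by blast
    then have "reach E w u" by (blast dest: dpath_mem_reach)
    then show False using reach_antisym[OF acyclic uw] assms(3) by blast
  qed
  ultimately show "paths_V E w v \<subset> paths_V E u v"
    using paths_cut_vertex(1)[OF assms(2)] by blast
qed

lemma unique_successor:
  assumes uw: "(u, w) \<in> E" and wv: "reach E w v"
    and only: "\<And>w'. (u, w') \<in> E \<Longrightarrow> reach E w' v \<Longrightarrow> w' = w"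
  shows "cut_vertex E u w v" "unique_dpath E u w"
proof -
  show "cut_vertex E u w v"
    unfolding cut_vertex_def
  proof (intro conjI allI impI)
    show "reach E u w" "reach E w v" using edge_reach[OF uw] wv .
    fix xs assume xs: "is_dpath E xs u v"
    have "u \<noteq> v" using acyclic_edge_not_reach[OF acyclic uw] wv by blast
    then have "1 < length xs" "(u, xs ! 1) \<in> E" "is_dpath E (drop 1 xs) (xs ! 1) v"
      using dpath_second_vertex[OF xs] by auto
    then show "w \<in> set xs" using only[OF _ dpath_reach] nth_mem by metis
  qed
  show "unique_dpath E u w"
    unfolding unique_dpath_def
  proof (rule ex1I[of _ "[u, w]"])
    show "is_dpath E [u, w] u w" using dpath_Cons[OF _ uw, of "[w]" w] by simp
    fix xs assume xs: "is_dpath E xs u w"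
    have "u \<noteq> w" using acyclic_edge_neq[OF acyclic uw] .
    then have second: "(u, xs ! 1) \<in> E" "is_dpath E (drop 1 xs) (xs ! 1) w" "xs = u # drop 1 xs"
      using dpath_second_vertex[OF xs] by auto
    then have "xs ! 1 = w" using only reach_trans[OF dpath_reach[OF second(2)] wv] by blast
    then show "xs = [u, w]" using second dpath_self[OF acyclic] by metis
  qed
qed

lemma branching_path_exists: "u \<in> V \<Longrightarrow> reach E u v \<Longrightarrow> branching_path V E u v"
proof (induction "card (paths_V E u v)" arbitrary: u rule: less_induct)
  case less
  have IH: "branching_path V E w v" if "cut_vertex E u w v" "u \<noteq> w" "w \<in> V" for w
    using less.hyps[OF card_paths_V_cut_vertex_less[OF less.prems(1) that(1,2)] that(3)]
      cut_vertexD[OF that(1)] by blast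
  show ?case
  proof (cases "u = v")
    case True
    then show ?thesis using branching_path.unique unique_dpath_refl[OF acyclic] by metis
  next
    case False
    obtain xs where "is_dpath E xs u v" using reach_imp_dpath[OF less.prems(2)] ..
    then have "(u, xs ! 1) \<in> E" "is_dpath E (drop 1 xs) (xs ! 1) v"
      using dpath_second_vertex[OF _ False] by blast+
    then obtain w where w: "(u, w) \<in> E" "reach E w v" by (blast dest: dpath_reach)
    show ?thesis
    proof (cases "\<exists>w'. (u, w') \<in> E \<and> reach E w' v \<and> w' \<noteq> w")
      case True
      then obtain w' where "(u, w') \<in> E" "reach E w' v" "w' \<noteq> w" by blast
      then obtain y where y: "is_sbp V E u y" "cut_vertex E u y v" "y \<noteq> u"
        using branching_vertex_sbp[OF w(1)] w(2) by blast
      have "branching_path V E y v" using IH[OF y(2)] y(1,3) unfolding is_sbp_def by blast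
      then show ?thesis
        using branching_path.step[OF unique_dpath_refl[OF acyclic] y(1) _ cut_vertex_refl y(2)]
          less.prems(2) by blast
    next
      case False
      then have cut: "cut_vertex E u w v" and uniq: "unique_dpath E u w"
        using unique_successor[OF w] by blast+
      have "w \<in> V" using w(1) edges_subset by blast
      then have "branching_path V E w v" using IH[OF cut] acyclic_edge_neq[OF acyclic w(1)] by blast
      then show ?thesis using branching_path_unique_prefix[OF acyclic uniq _ cut] by blast
    qed
  qed
qed

end

theorem lemma6:
  fixes V :: "'a set" and E :: "('a \<times> 'a) set" and u v :: 'a
  assumes "cactus_network V E" and "u \<in> V" and "v \<in> V" and "reach E u v"
  shows "\<exists>(m::nat) (s::nat \<Rightarrow> 'a) (t::nat \<Rightarrow> 'a).
     let a = (\<lambda>j. if j = 0 then u else t j);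
         b = (\<lambda>j. if j = m then v else s (Suc j))
     in (\<forall>j \<in> {1..m}. is_sbp V E (s j) (t j)) \<and>
        (\<forall>j \<in> {0..m}. \<exists>!xs. is_dpath E xs (a j) (b j)) \<and>
        paths_V E u v = (\<Union>j \<in> {0..m}. paths_V E (a j) (b j)) \<union> (\<Union>j \<in> {1..m}. sbp_V E (s j) (t j)) \<and>
        paths_E E u v = (\<Union>j \<in> {0..m}. paths_E E (a j) (b j)) \<union> (\<Union>j \<in> {1..m}. sbp_E E (s j) (t j))"
proof -
  interpret cactus V E by unfold_locales (rule assms(1))
  have "branching_path V E u v" using branching_path_exists assms(2,4) .
  then obtain m s t where "bp_decomposition V E u v m s t"
    using branching_path_bp_decomposition[OF _ acyclic] by blast
  then show ?thesis unfolding bp_decomposition_def by blast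
qed

end
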